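(* Let $V$ be a real Hilbert space, $C\subseteq V$ nonempty closed convex, $B$ a real Banach space, $A\subseteq B$, $m\in V^*$, and let $K\colon C\to 2^C$ satisfy $(\mathcal{H}_K)$. Assume there is a bounded subset $C_0\subseteq V$ with $K(u)\cap C_0\neq\emptyset$ for all $u\in C$, and let $T\colon B\times V\times V\to\mathbb{R}$ be a trilinear form such that for some constants $\alpha,\beta>0$, $$|T(a,u,v)|\le\beta\|a\|_B\|u\|_V\|v\|_V\ \text{ for all }(a,u,v)\in B\times V\times V,\qquad T(a,v,v)\ge\alpha\|v\|_V^2\ \text{ for all }(a,v)\in A\times V.$$ Then for each $a\in A$, the set of all $u\in C$ with $u\in K(u)$ and $$T(a,u,v-u)\ge\langle m,v-u\rangle\quad\text{for all }v\in K(u)$$ is nonempty, bounded and weakly closed.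
   Context: Hypothesis $(\mathcal{H}_K)$: for every $u\in C$ the set $K(u)\subseteq C$ is nonempty, closed and convex, and (i) for any sequence $\{x_n\}\subset C$ with $x_n\rightharpoonup x$ weakly and any $y\in K(x)$ there is a sequence $\{y_n\}\subset C$ with $y_n\in K(x_n)$ and $y_n\to y$ strongly; (ii) for any sequences $\{x_n\},\{y_n\}\subset C$ with $y_n\in K(x_n)$, $x_n\rightharpoonup x$ and $y_n\rightharpoonup y$, one has $y\in K(x)$. Here $\langle\cdot,\cdot\rangle$ is the duality pairing between $V^*$ and $V$. *)

theory Defs
  imports "HOL-Analysis.Analysis"
begin

definition weak_conv :: "(nat \<Rightarrow> 'v::real_normed_vector) \<Rightarrow> 'v \<Rightarrow> bool" where
  "weak_conv x y \<longleftrightarrow>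
     (\<forall>f :: 'v \<Rightarrow> real. bounded_linear f \<longrightarrow> (\<lambda>n. f (x n)) \<longlonglongrightarrow> f y)"

definition weakly_closed :: "'v::real_normed_vector set \<Rightarrow> bool" where
  "weakly_closed S \<longleftrightarrow>
     (\<forall>x y. (\<forall>n. x n \<in> S) \<longrightarrow> weak_conv x y \<longrightarrow> y \<in> S)"

definition hyp_K :: "'v::real_normed_vector set \<Rightarrow> ('v \<Rightarrow> 'v set) \<Rightarrow> bool" where
  "hyp_K C K \<longleftrightarrow>
     (\<forall>u\<in>C. K u \<subseteq> C \<and> K u \<noteq> {} \<and> closed (K u) \<and> convex (K u)) \<and>
     (\<forall>x xl y. (\<forall>n. x n \<in> C) \<longrightarrow> xl \<in> C \<longrightarrow> weak_conv x xl \<longrightarrow> y \<in> K xl \<longrightarrow>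
        (\<exists>yn. (\<forall>n. yn n \<in> C \<and> yn n \<in> K (x n)) \<and> yn \<longlonglongrightarrow> y)) \<and>
     (\<forall>x y xl yl. (\<forall>n. x n \<in> C) \<longrightarrow> (\<forall>n. y n \<in> C) \<longrightarrow> (\<forall>n. y n \<in> K (x n)) \<longrightarrow>
        xl \<in> C \<longrightarrow> weak_conv x xl \<longrightarrow> weak_conv y yl \<longrightarrow> yl \<in> K xl)"

definition trilinear :: "('b::real_vector \<Rightarrow> 'v::real_vector \<Rightarrow> 'v \<Rightarrow> real) \<Rightarrow> bool" where
  "trilinear T \<longleftrightarrow>
     (\<forall>u v. linear (\<lambda>a. T a u v)) \<and> (\<forall>a v. linear (\<lambda>u. T a u v)) \<and>
     (\<forall>a u. linear (\<lambda>v. T a u v))"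

end

theory Submission
  imports Defs "HOL-Library.Diagonal_Subsequence" "HOL-Homology.Homology"
begin

text \<open>For fixed \<open>a \<in> A\<close>, \<open>T a\<close> is a bounded coercive bilinear form, so by Stampacchia's
  theorem each obstacle \<open>K w\<close> carries a unique solution \<open>vi_map w\<close> of the variational
  inequality; the sets \<open>K w \<inter> C\<^sub>0\<close> and coercivity bound all these solutions uniformly.
  Hypothesis \<open>(\<H>\<^sub>K)\<close> and uniqueness make \<open>vi_map\<close> weakly sequentially continuous, so a
  Schauder--Tychonoff type argument on the bounded closed convex set \<open>C \<inter> cball 0 R\<close>
  yields a fixed point \<open>u = vi_map u\<close>, i.e. a solution of the quasi-variational inequality.
  Boundedness of the solution set comes from the same uniform bound, weak closedness from
  the stability of solutions under weak limits.\<close>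

section \<open>Projections onto closed convex sets and the Riesz representation\<close>

lemma parallelogram_law:
  fixes a b :: "'a::real_inner"
  shows "(norm (a - b))\<^sup>2 + (norm (a + b))\<^sup>2 = 2 * (norm a)\<^sup>2 + 2 * (norm b)\<^sup>2"
  by (simp add: power2_norm_eq_inner inner_diff_left inner_diff_right inner_add_left
      inner_add_right inner_commute)

lemma convex_minimizing_seq_Cauchy:
  fixes S :: "'v::real_inner set"
  assumes S: "convex S" and s: "\<And>n. s n \<in> S"
    and lim: "(\<lambda>n. norm (x - s n)) \<longlonglongrightarrow> infdist x S"
  shows "Cauchy s"
proof (rule metric_CauchyI)
  fix e :: real assume "e > 0"
  define d where "d = infdist x S"
  have "(\<lambda>n. (norm (x - s n))\<^sup>2) \<longlonglongrightarrow> d\<^sup>2"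
    using lim unfolding d_def by (intro tendsto_intros)
  then have "\<forall>\<^sub>F n in sequentially. (norm (x - s n))\<^sup>2 < d\<^sup>2 + e\<^sup>2 / 4"
    using \<open>e > 0\<close> by (intro order_tendstoD(2)) auto
  then obtain N where N: "\<And>n. n \<ge> N \<Longrightarrow> (norm (x - s n))\<^sup>2 < d\<^sup>2 + e\<^sup>2 / 4"
    unfolding eventually_sequentially by blast
  have "dist (s m) (s n) < e" if "m \<ge> N" "n \<ge> N" for m n
  proof -
    have mid: "(1/2) *\<^sub>R s m + (1/2) *\<^sub>R s n \<in> S"
      using convexD[OF S s s, of "1/2" "1/2"] by simp
    have "(x - s m) + (x - s n) = 2 *\<^sub>R (x - ((1/2) *\<^sub>R s m + (1/2) *\<^sub>R s n))"
      by (simp add: algebra_simps scaleR_2)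
    moreover have "d \<le> norm (x - ((1/2) *\<^sub>R s m + (1/2) *\<^sub>R s n))"
      using infdist_le[OF mid] by (simp add: d_def dist_norm)
    ultimately have "2 * d \<le> norm ((x - s m) + (x - s n))" by simp
    moreover have "d \<ge> 0" by (simp add: d_def infdist_nonneg)
    ultimately have "4 * d\<^sup>2 \<le> (norm ((x - s m) + (x - s n)))\<^sup>2"
      using power_mono[of "2 * d" _ 2] by (simp add: power_mult_distrib)
    moreover have "(norm (s n - s m))\<^sup>2 + (norm ((x - s m) + (x - s n)))\<^sup>2
        = 2 * (norm (x - s m))\<^sup>2 + 2 * (norm (x - s n))\<^sup>2"
      using parallelogram_law[of "x - s m" "x - s n"] by simp
    ultimately have "(norm (s m - s n))\<^sup>2 < e\<^sup>2"
      using N[OF that(1)] N[OF that(2)] by (simp add: norm_minus_commute)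
    then show ?thesis
      using \<open>e > 0\<close> by (simp add: dist_norm power_less_imp_less_base less_imp_le)
  qed
  then show "\<exists>M. \<forall>m\<ge>M. \<forall>n\<ge>M. dist (s m) (s n) < e" by blast
qed

lemma nearest_point_exists:
  fixes S :: "'v::{real_inner,complete_space} set"
  assumes S: "closed S" "convex S" "S \<noteq> {}"
  obtains p where "p \<in> S" "\<And>y. y \<in> S \<Longrightarrow> norm (x - p) \<le> norm (x - y)"
proof -
  have "\<forall>n. \<exists>s\<in>S. dist x s < infdist x S + 1 / (real n + 1)"
  proof
    fix n
    have "(INF a\<in>S. dist x a) < infdist x S + 1 / (real n + 1)"
      using infdist_notempty[OF S(3)] by simp
    then show "\<exists>s\<in>S. dist x s < infdist x S + 1 / (real n + 1)"
      using S(3) by (subst (asm) cINF_less_iff) (auto intro: bdd_belowI[of _ 0])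
  qed
  then obtain s where s: "\<And>n. s n \<in> S" "\<And>n. norm (x - s n) < infdist x S + 1 / (real n + 1)"
    by (metis dist_norm)
  have inv: "(\<lambda>n. 1 / (real n + 1)) \<longlonglongrightarrow> 0"
    using LIMSEQ_inverse_real_of_nat by (simp add: inverse_eq_divide add.commute)
  have lim: "(\<lambda>n. norm (x - s n)) \<longlonglongrightarrow> infdist x S"
  proof (rule tendsto_sandwich[of "\<lambda>_. infdist x S" _ _ "\<lambda>n. infdist x S + 1 / (real n + 1)"])
    show "\<forall>\<^sub>F n in sequentially. infdist x S \<le> norm (x - s n)"
      using infdist_le[OF s(1)] by (simp add: dist_norm)
    show "\<forall>\<^sub>F n in sequentially. norm (x - s n) \<le> infdist x S + 1 / (real n + 1)"
      using s(2) by (simp add: less_imp_le)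
    show "(\<lambda>n. infdist x S + 1 / (real n + 1)) \<longlonglongrightarrow> infdist x S"
      using tendsto_add[OF tendsto_const inv] by simp
  qed simp
  obtain p where p: "s \<longlonglongrightarrow> p"
    using convex_minimizing_seq_Cauchy[OF S(2) s(1) lim] Cauchy_convergent_iff convergent_def by blast
  have "p \<in> S" using S(1) s(1) p closed_sequentially by blast
  moreover have "norm (x - p) = infdist x S"
    using LIMSEQ_unique[OF tendsto_norm[OF tendsto_diff[OF tendsto_const p]] lim] .
  ultimately show thesis
    using that infdist_le[of _ S x] by (simp add: dist_norm)
qed

lemma nearest_point_obtuse:
  fixes S :: "'v::real_inner set"
  assumes "convex S" "p \<in> S" "\<And>y. y \<in> S \<Longrightarrow> norm (x - p) \<le> norm (x - y)" "y \<in> S"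
  shows "inner (x - p) (y - p) \<le> 0"
proof (rule ccontr)
  assume neg: "\<not> ?thesis"
  define b where "b = inner (x - p) (y - p)"
  define c where "c = (norm (y - p))\<^sup>2"
  have b: "b > 0" using neg b_def by simp
  have c: "c > 0" using neg unfolding c_def by (cases "y = p") auto
  define t where "t = min 1 (b / c)"
  have t: "0 < t" "t \<le> 1" "t * c \<le> b"
    using b c by (auto simp: t_def min_def field_simps)
  have "p + t *\<^sub>R (y - p) = (1 - t) *\<^sub>R p + t *\<^sub>R y" by (simp add: algebra_simps)
  then have inS: "p + t *\<^sub>R (y - p) \<in> S"
    using convexD[OF assms(1) assms(2,4)] t by simp
  have "(norm (x - (p + t *\<^sub>R (y - p))))\<^sup>2 = (norm (x - p))\<^sup>2 - t * b - t * (b - t * c)"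
    unfolding b_def c_def power2_norm_eq_inner
    by (simp add: inner_diff_left inner_diff_right inner_add_left inner_add_right inner_commute
        power2_eq_square algebra_simps)
  also have "\<dots> < (norm (x - p))\<^sup>2"
    using t b mult_pos_pos[of t b] mult_nonneg_nonneg[of t "b - t * c"] by linarith
  finally have "norm (x - (p + t *\<^sub>R (y - p))) < norm (x - p)"
    by (meson norm_ge_zero power_less_imp_less_base)
  with assms(3)[OF inS] show False by simp
qed

definition convex_proj :: "'v::real_inner set \<Rightarrow> 'v \<Rightarrow> 'v" where
  "convex_proj S x = (SOME p. p \<in> S \<and> (\<forall>y\<in>S. inner (x - p) (y - p) \<le> 0))"

lemma
  fixes S :: "'v::{real_inner,complete_space} set"
  assumes "closed S" "convex S" "S \<noteq> {}"
  shows convex_proj_in: "convex_proj S x \<in> S"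
    and convex_proj_obtuse: "y \<in> S \<Longrightarrow> inner (x - convex_proj S x) (y - convex_proj S x) \<le> 0"
proof -
  obtain p where "p \<in> S" "\<And>y. y \<in> S \<Longrightarrow> norm (x - p) \<le> norm (x - y)"
    using nearest_point_exists[OF assms] by blast
  then have "\<exists>p. p \<in> S \<and> (\<forall>y\<in>S. inner (x - p) (y - p) \<le> 0)"
    using nearest_point_obtuse[OF assms(2)] by blast
  then have "convex_proj S x \<in> S \<and> (\<forall>y\<in>S. inner (x - convex_proj S x) (y - convex_proj S x) \<le> 0)"
    unfolding convex_proj_def by (rule someI_ex)
  then show "convex_proj S x \<in> S" "y \<in> S \<Longrightarrow> inner (x - convex_proj S x) (y - convex_proj S x) \<le> 0"
    by auto
qed

lemma convex_proj_nonexpansive: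
  fixes S :: "'v::{real_inner,complete_space} set"
  assumes "closed S" "convex S" "S \<noteq> {}"
  shows "norm (convex_proj S x - convex_proj S y) \<le> norm (x - y)"
proof -
  let ?p = "convex_proj S x" and ?q = "convex_proj S y"
  have "inner (x - ?p) (?q - ?p) \<le> 0" "inner (y - ?q) (?p - ?q) \<le> 0"
    using convex_proj_in[OF assms] convex_proj_obtuse[OF assms] by blast+
  then have "(norm (?p - ?q))\<^sup>2 \<le> inner (x - y) (?p - ?q)"
    unfolding power2_norm_eq_inner
    by (simp add: inner_diff_left inner_diff_right inner_commute algebra_simps)
  also have "\<dots> \<le> norm (x - y) * norm (?p - ?q)" by (rule norm_cauchy_schwarz)
  finally show ?thesis
    by (cases "norm (?p - ?q) = 0") (auto simp: power2_eq_square)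
qed

lemma convex_proj_self:
  fixes S :: "'v::{real_inner,complete_space} set"
  assumes "closed S" "convex S" "x \<in> S"
  shows "convex_proj S x = x"
proof -
  have "inner (x - convex_proj S x) (x - convex_proj S x) \<le> 0"
    using convex_proj_obtuse[OF assms(1,2)] assms(3) by blast
  then show ?thesis by (metis inner_eq_zero_iff inner_ge_zero eq_iff_diff_eq_0 order.antisym)
qed

lemma continuous_on_convex_proj:
  fixes S :: "'v::{real_inner,complete_space} set"
  assumes "closed S" "convex S" "S \<noteq> {}"
  shows "continuous_on U (convex_proj S)"
  by (rule lipschitz_on_continuous_on[of 1])
    (auto simp: lipschitz_on_def dist_norm convex_proj_nonexpansive[OF assms])

lemma convex_proj_subspace_orthogonal:
  fixes W :: "'v::{real_inner,complete_space} set"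
  assumes "subspace W" "closed W" "w \<in> W"
  shows "inner (z - convex_proj W z) w = 0"
proof -
  have W: "closed W" "convex W" "W \<noteq> {}"
    using assms subspace_imp_convex by auto
  have "convex_proj W z + w \<in> W" "convex_proj W z - w \<in> W"
    using convex_proj_in[OF W] assms by (auto simp: subspace_add subspace_diff)
  from this[THEN convex_proj_obtuse[OF W, where x=z]] show ?thesis
    by (simp add: inner_diff_right)
qed

lemma riesz_representation:
  fixes f :: "'v::{real_inner,complete_space} \<Rightarrow> real"
  assumes "bounded_linear f"
  obtains z where "\<And>x. f x = inner z x"
proof (cases "\<forall>x. f x = 0")
  case True
  then show thesis by (intro that[of 0]) auto
next
  case False
  then obtain w where w: "f w \<noteq> 0" by blast
  interpret f: bounded_linear f by fact
  define N where "N = {x. f x = 0}"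
  have N: "subspace N" "closed N"
    unfolding N_def subspace_def
    by (auto simp: f.add f.scale f.zero intro!: closed_Collect_eq continuous_intros f.continuous_on)
  define y where "y = w - convex_proj N w"
  have fy: "f y = f w"
    using convex_proj_in[OF N(2) subspace_imp_convex[OF N(1)]] N(1) subspace_0
    by (force simp: y_def f.diff N_def)
  have "f x = inner ((f y / inner y y) *\<^sub>R y) x" for x
  proof -
    have "x - (f x / f y) *\<^sub>R y \<in> N" using fy w by (simp add: N_def f.diff f.scale)
    then have "inner y (x - (f x / f y) *\<^sub>R y) = 0"
      unfolding y_def by (rule convex_proj_subspace_orthogonal[OF N])
    moreover have "y \<noteq> 0" using fy w by auto
    ultimately show ?thesis using fy w by (simp add: inner_diff_right field_simps)
  qed
  then show thesis by (rule that)
qed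

section \<open>Weak convergence\<close>

lemma weak_conv_iff_inner:
  fixes x :: "nat \<Rightarrow> 'v::{real_inner,complete_space}"
  shows "weak_conv x y \<longleftrightarrow> (\<forall>z. (\<lambda>n. inner z (x n)) \<longlonglongrightarrow> inner z y)"
proof
  assume "weak_conv x y"
  then show "\<forall>z. (\<lambda>n. inner z (x n)) \<longlonglongrightarrow> inner z y"
    unfolding weak_conv_def using bounded_linear_inner_right by blast
next
  assume H: "\<forall>z. (\<lambda>n. inner z (x n)) \<longlonglongrightarrow> inner z y"
  show "weak_conv x y"
    unfolding weak_conv_def
  proof (intro allI impI)
    fix f :: "'v \<Rightarrow> real" assume f: "bounded_linear f"
    obtain z where "\<And>x. f x = inner z x" using riesz_representation[OF f] by blast
    then show "(\<lambda>n. f (x n)) \<longlonglongrightarrow> f y" using H by simp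
  qed
qed

lemma tendsto_imp_weak_conv:
  assumes "x \<longlonglongrightarrow> y" shows "weak_conv x y"
  unfolding weak_conv_def using assms bounded_linear.tendsto by blast

lemma weak_conv_const: "weak_conv (\<lambda>n. y) y"
  by (rule tendsto_imp_weak_conv) simp

lemma weak_conv_subseq:
  assumes "weak_conv x y" "strict_mono r" shows "weak_conv (x \<circ> r) y"
  using assms LIMSEQ_subseq_LIMSEQ[of "\<lambda>n. f (x n)" for f] unfolding weak_conv_def
  by (auto simp: o_def)

lemma weak_conv_diff:
  assumes "weak_conv x y" "weak_conv x' y'" shows "weak_conv (\<lambda>n. x n - x' n) (y - y')"
  using assms unfolding weak_conv_def
  by (auto simp: linear_diff bounded_linear.linear intro!: tendsto_diff)

lemma weak_conv_diff_limit:
  assumes "weak_conv x y" shows "weak_conv (\<lambda>n. x n - y) 0"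
  using weak_conv_diff[OF assms weak_conv_const[of y]] by simp

lemma closed_convex_weak_limit:
  fixes S :: "'v::{real_inner,complete_space} set"
  assumes S: "closed S" "convex S" and x: "\<And>n. x n \<in> S" and w: "weak_conv x y"
  shows "y \<in> S"
proof -
  have S': "closed S" "convex S" "S \<noteq> {}" using S x by auto
  define p where "p = convex_proj S y"
  have "(\<lambda>n. inner (y - p) (x n - p)) \<longlonglongrightarrow> inner (y - p) (y - p)"
    using w weak_conv_diff[OF w weak_conv_const, of p] unfolding weak_conv_iff_inner by blast
  moreover have "inner (y - p) (x n - p) \<le> 0" for n
    unfolding p_def using convex_proj_obtuse[OF S' x] .
  ultimately have "inner (y - p) (y - p) \<le> 0"
    by (intro tendsto_upperbound[of "\<lambda>n. inner (y - p) (x n - p)"]) auto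
  then have "y = p" by (metis inner_eq_zero_iff inner_ge_zero eq_iff_diff_eq_0 order.antisym)
  then show ?thesis using convex_proj_in[OF S', of y] by (simp add: p_def)
qed

lemma
  fixes y :: "nat \<Rightarrow> 'v::real_inner"
  assumes M: "\<And>n. norm (y n) \<le> M"
  shows subspace_convergent_inner: "subspace {z. convergent (\<lambda>n. inner z (y n))}"
    and closed_convergent_inner: "closed {z. convergent (\<lambda>n. inner z (y n))}"
proof -
  show "subspace {z. convergent (\<lambda>n. inner z (y n))}"
    unfolding subspace_def
    by (auto simp: inner_add_left intro: convergent_add convergent_const
        dest: convergent_LIMSEQ_iff[THEN iffD1] tendsto_mult_left[where c=c for c] intro: convergentI)
  have M0: "M \<ge> 0" using M[of 0] norm_ge_zero order_trans by blast
  have close: "\<bar>inner z (y n) - inner w (y n)\<bar> \<le> norm (z - w) * M" for z w n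
    using Cauchy_Schwarz_ineq2[of "z - w" "y n"] M[of n]
    by (simp add: inner_diff_left) (meson mult_left_mono norm_ge_zero order_trans)
  have "Cauchy (\<lambda>n. inner z (y n))" if zc: "z \<in> closure {z. convergent (\<lambda>n. inner z (y n))}" for z
  proof (rule metric_CauchyI)
    fix e :: real assume e: "e > 0"
    have "e / (4 * (M + 1)) > 0" using e M0 by simp
    then obtain w where w: "convergent (\<lambda>n. inner w (y n))" "dist w z < e / (4 * (M + 1))"
      using zc unfolding closure_approachable by blast
    have "norm (z - w) * M \<le> e / 4"
    proof -
      have "norm (z - w) * M \<le> e / (4 * (M + 1)) * (M + 1)"
        using w(2) M0 e by (intro mult_mono) (auto simp: dist_norm norm_minus_commute)
      also have "\<dots> = e / 4" using M0 by (simp add: field_simps)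
      finally show ?thesis .
    qed
    moreover obtain N where N: "\<And>m n. m \<ge> N \<Longrightarrow> n \<ge> N \<Longrightarrow> dist (inner w (y m)) (inner w (y n)) < e / 2"
      using metric_CauchyD[OF convergent_Cauchy[OF w(1)], of "e / 2"] e by auto
    ultimately have "dist (inner z (y m)) (inner z (y n)) < e" if "m \<ge> N" "n \<ge> N" for m n
      using N[OF that] close[where z=z and w=w and n=m] close[where z=z and w=w and n=n] unfolding dist_real_def by linarith
    then show "\<exists>N. \<forall>m\<ge>N. \<forall>n\<ge>N. dist (inner z (y m)) (inner z (y n)) < e" by blast
  qed
  then have "closure {z. convergent (\<lambda>n. inner z (y n))} \<subseteq> {z. convergent (\<lambda>n. inner z (y n))}"
    using Cauchy_convergent_iff by blast
  then show "closed {z. convergent (\<lambda>n. inner z (y n))}"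
    by (rule closure_subset_eq[THEN iffD1])
qed

lemma convergent_inner_imp_weak_conv:
  fixes y :: "nat \<Rightarrow> 'v::{real_inner,complete_space}"
  assumes M: "\<And>n. norm (y n) \<le> M" and conv: "\<And>z. convergent (\<lambda>n. inner z (y n))"
  obtains l where "weak_conv y l"
proof -
  define \<phi> where "\<phi> z = lim (\<lambda>n. inner z (y n))" for z
  have \<phi>: "(\<lambda>n. inner z (y n)) \<longlonglongrightarrow> \<phi> z" for z
    unfolding \<phi>_def using conv convergent_LIMSEQ_iff by blast
  have "bounded_linear \<phi>"
  proof (rule bounded_linear_intro)
    fix a b
    have "(\<lambda>n. inner (a + b) (y n)) \<longlonglongrightarrow> \<phi> a + \<phi> b"
      unfolding inner_add_left by (intro tendsto_add \<phi>)
    then show "\<phi> (a + b) = \<phi> a + \<phi> b" using \<phi> LIMSEQ_unique by blast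
  next
    fix c a
    have "(\<lambda>n. inner (c *\<^sub>R a) (y n)) \<longlonglongrightarrow> c *\<^sub>R \<phi> a"
      unfolding inner_scaleR_left by (simp add: tendsto_mult_left \<phi>)
    then show "\<phi> (c *\<^sub>R a) = c *\<^sub>R \<phi> a" using \<phi> LIMSEQ_unique by blast
  next
    fix a
    have "\<bar>inner a (y n)\<bar> \<le> norm a * M" for n
      using Cauchy_Schwarz_ineq2[of a "y n"] M[of n]
      by (meson mult_left_mono norm_ge_zero order_trans)
    then have "\<bar>\<phi> a\<bar> \<le> norm a * M"
      using tendsto_rabs[OF \<phi>[of a]] by (intro tendsto_upperbound) auto
    then show "norm (\<phi> a) \<le> norm a * M" by simp
  qed
  then obtain l where "\<And>z. \<phi> z = inner l z" using riesz_representation by blast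
  then have "weak_conv y l"
    unfolding weak_conv_iff_inner using \<phi> by (simp add: inner_commute)
  then show thesis by (rule that)
qed

text \<open>The \<open>z\<close> for which \<open>inner z (y n)\<close> converges form a closed subspace containing the
  sequence; the orthogonal complement of that subspace does not see the sequence at all.\<close>

lemma convergent_inner_self_imp_weak_conv:
  fixes y :: "nat \<Rightarrow> 'v::{real_inner,complete_space}"
  assumes M: "\<And>n. norm (y n) \<le> M" and conv: "\<And>m. convergent (\<lambda>n. inner (y m) (y n))"
  obtains l where "weak_conv y l"
proof (rule convergent_inner_imp_weak_conv[OF M])
  fix z
  define L where "L = {z. convergent (\<lambda>n. inner z (y n))}"
  have L: "subspace L" "closed L" "L \<noteq> {}"
    unfolding L_def using subspace_convergent_inner[OF M] closed_convergent_inner[OF M] conv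
    by auto
  have "inner z (y n) = inner (convex_proj L z) (y n)" for n
    using convex_proj_subspace_orthogonal[OF L(1,2), of "y n" z] conv
    by (simp add: L_def inner_diff_left)
  moreover have "convex_proj L z \<in> L"
    using convex_proj_in[OF L(2) subspace_imp_convex[OF L(1)] L(3)] .
  ultimately show "convergent (\<lambda>n. inner z (y n))" by (simp add: L_def)
qed

lemma diagonal_subseq_convergent_inner:
  fixes x :: "nat \<Rightarrow> 'v::real_inner"
  assumes M: "\<And>n. norm (x n) \<le> M"
  obtains r where "strict_mono r" "\<And>k. convergent (\<lambda>n. inner (x k) (x (r n)))"
proof -
  define P where "P k s \<longleftrightarrow> convergent (\<lambda>n. inner (x k) (x (s n)))"
    for k and s :: "nat \<Rightarrow> nat"
  interpret subseqs P
  proof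
    fix k and s :: "nat \<Rightarrow> nat"
    have "\<bar>inner (x k) (x (s n))\<bar> \<le> M * M" for n
      using Cauchy_Schwarz_ineq2[of "x k" "x (s n)"] M[of k] M[of "s n"]
      by (meson mult_mono norm_ge_zero order_trans)
    then have "bounded (range (\<lambda>n. inner (x k) (x (s n))))"
      by (intro boundedI[of _ "M * M"]) auto
    then obtain l r where "strict_mono r" "((\<lambda>n. inner (x k) (x (s n))) \<circ> r) \<longlonglongrightarrow> l"
      using bounded_imp_convergent_subsequence by blast
    then show "\<exists>r'. strict_mono r' \<and> P k (s \<circ> r')"
      by (auto simp: P_def o_def convergent_def)
  qed
  have "convergent (\<lambda>n. inner (x k) (x (diagseq n)))" for k
  proof -
    have "P k (diagseq \<circ> ((+) (Suc k)))"
      by (rule diagseq_holds)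
        (auto simp: P_def o_def intro: convergent_subseq_convergent[unfolded o_def])
    then have "convergent (\<lambda>n. inner (x k) (x (diagseq (n + Suc k))))"
      by (simp add: P_def o_def add.commute)
    then show ?thesis
      using convergent_ignore_initial_segment[of "\<lambda>n. inner (x k) (x (diagseq n))" "Suc k"] by simp
  qed
  then show thesis using that subseq_diagseq by blast
qed

lemma bounded_seq_weak_convergent_subseq:
  fixes x :: "nat \<Rightarrow> 'v::{real_inner,complete_space}"
  assumes M: "\<And>n. norm (x n) \<le> M"
  obtains r l where "strict_mono r" "weak_conv (x \<circ> r) l"
proof -
  obtain r where r: "strict_mono r" "\<And>k. convergent (\<lambda>n. inner (x k) (x (r n)))"
    using diagonal_subseq_convergent_inner[where x=x, OF M] by blast
  have "norm ((x \<circ> r) n) \<le> M" for n using M by simp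
  moreover have "convergent (\<lambda>n. inner ((x \<circ> r) m) ((x \<circ> r) n))" for m using r(2) by simp
  ultimately obtain l where "weak_conv (x \<circ> r) l"
    by (rule convergent_inner_self_imp_weak_conv)
  with r(1) show thesis by (rule that)
qed

lemma LIMSEQ_subseq_criterion:
  fixes X :: "nat \<Rightarrow> 'a::metric_space"
  assumes sub: "\<And>\<sigma> :: nat \<Rightarrow> nat. strict_mono \<sigma>
    \<Longrightarrow> \<exists>\<tau> :: nat \<Rightarrow> nat. strict_mono \<tau> \<and> (X \<circ> \<sigma> \<circ> \<tau>) \<longlonglongrightarrow> L"
  shows "X \<longlonglongrightarrow> L"
proof (rule ccontr)
  assume "\<not> X \<longlonglongrightarrow> L"
  then obtain \<epsilon> where \<epsilon>: "\<epsilon> > 0" "\<not> (\<forall>\<^sub>F n in sequentially. dist (X n) L < \<epsilon>)"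
    unfolding tendsto_iff by blast
  define I where "I = {n. \<not> dist (X n) L < \<epsilon>}"
  have "infinite I"
    using \<epsilon>(2) unfolding I_def cofinite_eq_sequentially[symmetric] eventually_cofinite by simp
  then have \<sigma>: "strict_mono (enumerate I)" and far: "\<And>n. enumerate I n \<in> I"
    by (simp_all add: strict_mono_enumerate enumerate_in_set)
  obtain \<tau> where "(X \<circ> enumerate I \<circ> \<tau>) \<longlonglongrightarrow> L" using sub[OF \<sigma>] by blast
  then have "\<forall>\<^sub>F n in sequentially. dist ((X \<circ> enumerate I \<circ> \<tau>) n) L < \<epsilon>"
    using \<epsilon>(1) unfolding tendsto_iff by blast
  then obtain n where "dist (X (enumerate I (\<tau> n))) L < \<epsilon>"
    by (auto simp: eventually_sequentially)
  with far[of "\<tau> n"] show False by (simp add: I_def)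
qed

lemma weak_conv_subseq_criterion:
  fixes x :: "nat \<Rightarrow> 'v::{real_inner,complete_space}"
  assumes sub: "\<And>\<sigma> :: nat \<Rightarrow> nat. strict_mono \<sigma>
    \<Longrightarrow> \<exists>\<tau> :: nat \<Rightarrow> nat. strict_mono \<tau> \<and> weak_conv (x \<circ> \<sigma> \<circ> \<tau>) l"
  shows "weak_conv x l"
  unfolding weak_conv_iff_inner
proof
  fix z
  show "(\<lambda>n. inner z (x n)) \<longlonglongrightarrow> inner z l"
  proof (rule LIMSEQ_subseq_criterion)
    fix \<sigma> :: "nat \<Rightarrow> nat" assume "strict_mono \<sigma>"
    then obtain \<tau> where "strict_mono \<tau>" "weak_conv (x \<circ> \<sigma> \<circ> \<tau>) l" using sub by blast
    then show "\<exists>\<tau>. strict_mono \<tau> \<and> ((\<lambda>n. inner z (x n)) \<circ> \<sigma> \<circ> \<tau>) \<longlonglongrightarrow> inner z l"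
      unfolding weak_conv_iff_inner by (auto simp: o_def)
  qed
qed

section \<open>Variational inequalities\<close>

lemma bounded_bilinear_weak_conv_left:
  fixes B :: "'a::real_normed_vector \<Rightarrow> 'b::real_normed_vector \<Rightarrow> real"
  assumes "bounded_bilinear B" "weak_conv x y"
  shows "(\<lambda>n. B (x n) v) \<longlonglongrightarrow> B y v"
  by (rule assms(2)[unfolded weak_conv_def, rule_format,
        OF bounded_bilinear.bounded_linear_left[OF assms(1)]])

lemma bounded_bilinear_weak_conv_right:
  fixes B :: "'a::real_normed_vector \<Rightarrow> 'b::real_normed_vector \<Rightarrow> real"
  assumes "bounded_bilinear B" "weak_conv x y"
  shows "(\<lambda>n. B v (x n)) \<longlonglongrightarrow> B v y"
  by (rule assms(2)[unfolded weak_conv_def, rule_format,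
        OF bounded_bilinear.bounded_linear_right[OF assms(1)]])

lemma bounded_bilinear_weak_strong_conv:
  fixes B :: "'a::real_normed_vector \<Rightarrow> 'b::real_normed_vector \<Rightarrow> real"
  assumes B: "bounded_bilinear B" and w: "weak_conv x y" and M: "\<And>n. norm (x n) \<le> M"
    and v: "v' \<longlonglongrightarrow> v"
  shows "(\<lambda>n. B (x n) (v' n)) \<longlonglongrightarrow> B y v"
proof -
  interpret B: bounded_bilinear B by fact
  obtain K where K: "\<And>a b. norm (B a b) \<le> norm a * norm b * K" "K > 0"
    using B.pos_bounded by blast
  have "(\<lambda>n. B (x n) (v' n - v)) \<longlonglongrightarrow> 0"
  proof (rule Lim_null_comparison)
    have "norm (B (x n) (v' n - v)) \<le> M * K * norm (v' n - v)" for n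
      using K(1)[of "x n" "v' n - v"] M[of n] K(2)
      by (smt (verit) mult.commute mult.left_commute mult_right_mono norm_ge_zero)
    then show "\<forall>\<^sub>F n in sequentially. norm (B (x n) (v' n - v)) \<le> M * K * norm (v' n - v)"
      by simp
    have "(\<lambda>n. norm (v' n - v)) \<longlonglongrightarrow> 0"
      using v by (simp add: LIM_zero_iff tendsto_norm_zero)
    then show "(\<lambda>n. M * K * norm (v' n - v)) \<longlonglongrightarrow> 0"
      by (rule tendsto_mult_right_zero)
  qed
  from tendsto_add[OF this bounded_bilinear_weak_conv_left[OF B w, of v]] show ?thesis
    by (simp add: B.diff_right)
qed

text \<open>Monotonicity \<open>B (x n - y) (x n - y) \<ge> 0\<close> is what allows passing to the weak limit
  on the left-hand side of the variational inequality, where only weak convergence is known.\<close>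

lemma variational_inequality_weak_limit:
  fixes B :: "'v::real_normed_vector \<Rightarrow> 'v \<Rightarrow> real"
  assumes B: "bounded_bilinear B" and pos: "\<And>w. B w w \<ge> 0" and m: "bounded_linear m"
    and w: "weak_conv x y" and M: "\<And>n. norm (x n) \<le> M" and v: "v' \<longlonglongrightarrow> v"
    and ineq: "\<And>n. B (x n) (v' n - x n) \<ge> m (v' n - x n)"
  shows "B y (v - y) \<ge> m (v - y)"
proof -
  interpret B: bounded_bilinear B by fact
  interpret m: bounded_linear m by fact
  have "m (v' n) - m (x n) \<le> B (x n) (v' n) - B (x n) y - B y (x n) + B y y" for n
    using pos[of "x n - y"] ineq[of n]
    by (simp add: B.diff_left B.diff_right m.diff)
  moreover have "(\<lambda>n. m (v' n) - m (x n)) \<longlonglongrightarrow> m v - m y"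
    using w m unfolding weak_conv_def by (intro tendsto_diff m.tendsto[OF v]) blast
  moreover have "(\<lambda>n. B (x n) (v' n) - B (x n) y - B y (x n) + B y y)
      \<longlonglongrightarrow> B y v - B y y - B y y + B y y"
    by (intro tendsto_intros bounded_bilinear_weak_strong_conv[OF B w M v]
        bounded_bilinear_weak_conv_left[OF B w] bounded_bilinear_weak_conv_right[OF B w])
  ultimately have "m v - m y \<le> B y v - B y y - B y y + B y y"
    by (intro LIMSEQ_le) auto
  then show ?thesis by (simp add: B.diff_right m.diff)
qed

definition bilinear_operator :: "('v::real_inner \<Rightarrow> 'v \<Rightarrow> real) \<Rightarrow> 'v \<Rightarrow> 'v" where
  "bilinear_operator B u = (SOME z. \<forall>v. B u v = inner z v)"

context
  fixes B :: "'v::{real_inner,complete_space} \<Rightarrow> 'v \<Rightarrow> real"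
  assumes B: "bounded_bilinear B"
begin

interpretation B: bounded_bilinear B by (fact B)

lemma bilinear_operator_inner: "B u v = inner (bilinear_operator B u) v"
proof -
  obtain z where "\<And>v. B u v = inner z v"
    using riesz_representation[OF B.bounded_linear_right[of u]] by blast
  then have "\<exists>z. \<forall>v. B u v = inner z v" by blast
  then have "\<forall>v. B u v = inner (bilinear_operator B u) v"
    unfolding bilinear_operator_def by (rule someI_ex)
  then show ?thesis by blast
qed

lemma bilinear_operator_diff:
  "bilinear_operator B (u - w) = bilinear_operator B u - bilinear_operator B w"
proof -
  have "inner (bilinear_operator B (u - w) - (bilinear_operator B u - bilinear_operator B w)) v = 0"
    for v by (simp add: inner_diff_left bilinear_operator_inner[symmetric] B.diff_left)
  from this[of "bilinear_operator B (u - w) - (bilinear_operator B u - bilinear_operator B w)"]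
  show ?thesis by simp
qed

lemma norm_bilinear_operator_le:
  assumes K: "\<And>a b. norm (B a b) \<le> norm a * norm b * K" "K > 0"
  shows "norm (bilinear_operator B u) \<le> K * norm u"
proof -
  have "(norm (bilinear_operator B u))\<^sup>2 \<le> norm u * norm (bilinear_operator B u) * K"
    using K(1)[of u "bilinear_operator B u"]
    by (simp add: bilinear_operator_inner power2_norm_eq_inner)
  then show ?thesis
    using K(2) by (cases "bilinear_operator B u = 0") (auto simp: power2_eq_square algebra_simps)
qed

end

text \<open>The contraction underlying the proof of Stampacchia's theorem: for a coercive
  and Lipschitz \<open>A\<close>, the map \<open>d \<mapsto> d - \<rho> A d\<close> contracts for \<open>\<rho> = \<alpha> / K\<^sup>2\<close>,
  with \<open>K\<close> enlarged so that \<open>\<alpha> \<le> K\<close>.\<close>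

lemma coercive_shift_contraction:
  fixes A :: "'v::real_inner \<Rightarrow> 'v"
  assumes \<alpha>: "\<alpha> > 0" and K: "K > 0"
    and coercive: "\<And>d. inner (A d) d \<ge> \<alpha> * (norm d)\<^sup>2" and bounded: "\<And>d. norm (A d) \<le> K * norm d"
  obtains \<rho> c where "\<rho> > 0" "0 \<le> c" "c < 1" "\<And>d. norm (d - \<rho> *\<^sub>R A d) \<le> c * norm d"
proof -
  define K' where "K' = K + \<alpha>"
  have K': "K' > \<alpha>" "K \<le> K'" using K \<alpha> by (auto simp: K'_def)
  define \<rho> where "\<rho> = \<alpha> / K'\<^sup>2"
  define c2 where "c2 = 1 - \<alpha>\<^sup>2 / K'\<^sup>2"
  have \<rho>: "\<rho> > 0" using \<alpha> K' by (simp add: \<rho>_def)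
  have c2: "0 \<le> c2" "c2 < 1"
    using \<alpha> K' power_mono[of \<alpha> K' 2] by (auto simp: c2_def field_simps)
  have "norm (d - \<rho> *\<^sub>R A d) \<le> sqrt c2 * norm d" for d
  proof -
    have "(norm (d - \<rho> *\<^sub>R A d))\<^sup>2 = (norm d)\<^sup>2 - 2 * \<rho> * inner (A d) d + \<rho>\<^sup>2 * (norm (A d))\<^sup>2"
      unfolding power2_norm_eq_inner
      by (simp add: inner_diff_left inner_diff_right inner_commute power2_eq_square algebra_simps)
    also have "\<dots> \<le> (norm d)\<^sup>2 - 2 * \<rho> * (\<alpha> * (norm d)\<^sup>2) + \<rho>\<^sup>2 * (K' * norm d)\<^sup>2"
    proof -
      have "norm (A d) \<le> K' * norm d"
        using bounded[of d] mult_right_mono[OF K'(2) norm_ge_zero[of d]] by linarith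
      then have "\<rho>\<^sup>2 * (norm (A d))\<^sup>2 \<le> \<rho>\<^sup>2 * (K' * norm d)\<^sup>2"
        by (intro mult_left_mono power_mono) auto
      moreover have "2 * \<rho> * (\<alpha> * (norm d)\<^sup>2) \<le> 2 * \<rho> * inner (A d) d"
        using coercive[of d] \<rho> by simp
      ultimately show ?thesis by linarith
    qed
    also have "\<dots> = (sqrt c2 * norm d)\<^sup>2"
      using K' \<alpha> c2 by (simp add: c2_def \<rho>_def power_mult_distrib power2_eq_square field_simps)
    finally show ?thesis by (rule power2_le_imp_le) (use c2 in simp)
  qed
  with c2 show thesis by (intro that[OF \<rho>, of "sqrt c2"]) (auto simp: real_sqrt_lt_1_iff)
qed

theorem stampacchia:
  fixes B :: "'v::{real_inner,complete_space} \<Rightarrow> 'v \<Rightarrow> real" and S :: "'v set"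
  assumes B: "bounded_bilinear B" and \<alpha>: "\<alpha> > 0" and coercive: "\<And>v. B v v \<ge> \<alpha> * (norm v)\<^sup>2"
    and m: "bounded_linear m" and S: "closed S" "convex S" "S \<noteq> {}"
  obtains u where "u \<in> S" "\<And>v. v \<in> S \<Longrightarrow> B u (v - u) \<ge> m (v - u)"
proof -
  define A where "A = bilinear_operator B"
  obtain K where K: "\<And>a b. norm (B a b) \<le> norm a * norm b * K" "K > 0"
    using bounded_bilinear.pos_bounded[OF B] by blast
  have A: "B u v = inner (A u) v" for u v
    unfolding A_def by (rule bilinear_operator_inner[OF B])
  have A_diff: "A (u - w) = A u - A w" for u w
    unfolding A_def by (rule bilinear_operator_diff[OF B])
  have A_bound: "norm (A u) \<le> K * norm u" for u
    unfolding A_def using norm_bilinear_operator_le[OF B K] .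
  have A_coercive: "inner (A u) u \<ge> \<alpha> * (norm u)\<^sup>2" for u
    using coercive[of u] by (simp add: A)
  obtain f where f: "\<And>v. m v = inner f v" using riesz_representation[OF m] by blast
  obtain \<rho> c where \<rho>: "\<rho> > 0" and c: "0 \<le> c" "c < 1"
    and contraction: "\<And>d. norm (d - \<rho> *\<^sub>R A d) \<le> c * norm d"
    using coercive_shift_contraction[OF \<alpha> K(2) A_coercive A_bound] by blast
  define G where "G u = convex_proj S (u - \<rho> *\<^sub>R (A u - f))" for u
  have "dist (G x) (G y) \<le> c * dist x y" for x y
  proof -
    have "dist (G x) (G y) \<le> norm ((x - \<rho> *\<^sub>R (A x - f)) - (y - \<rho> *\<^sub>R (A y - f)))"
      unfolding G_def dist_norm by (rule convex_proj_nonexpansive[OF S])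
    also have "(x - \<rho> *\<^sub>R (A x - f)) - (y - \<rho> *\<^sub>R (A y - f)) = (x - y) - \<rho> *\<^sub>R A (x - y)"
      by (simp add: A_diff algebra_simps)
    finally show ?thesis using contraction[of "x - y"] by (simp add: dist_norm)
  qed
  then obtain u where u: "G u = u" using banach_fix_type[OF c] by blast
  show thesis
  proof (rule that)
    show "u \<in> S" using convex_proj_in[OF S] u unfolding G_def by metis
    fix v assume "v \<in> S"
    then have "inner ((u - \<rho> *\<^sub>R (A u - f)) - u) (v - u) \<le> 0"
      using convex_proj_obtuse[OF S, of v "u - \<rho> *\<^sub>R (A u - f)"] u unfolding G_def by simp
    then have "\<rho> * inner (A u - f) (v - u) \<ge> 0" by (simp add: inner_diff_left)
    then have "inner (A u - f) (v - u) \<ge> 0" using \<rho> by (simp add: zero_le_mult_iff)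
    then show "B u (v - u) \<ge> m (v - u)" by (simp add: A f inner_diff_left)
  qed
qed

lemma stampacchia_unique:
  fixes B :: "'v::real_normed_vector \<Rightarrow> 'v \<Rightarrow> real"
  assumes B: "bounded_bilinear B" and \<alpha>: "\<alpha> > 0" and coercive: "\<And>v. B v v \<ge> \<alpha> * (norm v)\<^sup>2"
    and m: "bounded_linear m"
    and u1: "u1 \<in> S" "\<forall>v\<in>S. B u1 (v - u1) \<ge> m (v - u1)"
    and u2: "u2 \<in> S" "\<forall>v\<in>S. B u2 (v - u2) \<ge> m (v - u2)"
  shows "u1 = u2"
proof -
  interpret B: bounded_bilinear B by fact
  interpret m: bounded_linear m by fact
  have "B u1 (u2 - u1) \<ge> m (u2 - u1)" "B u2 (u1 - u2) \<ge> m (u1 - u2)" using u1 u2 by auto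
  then have "B (u2 - u1) (u2 - u1) \<le> 0"
    by (simp add: B.diff_left B.diff_right m.diff)
  with coercive[of "u2 - u1"] \<alpha> have "(norm (u2 - u1))\<^sup>2 \<le> 0"
    by (smt (verit) mult_pos_pos zero_less_power2)
  then show ?thesis by simp
qed

section \<open>Brouwer's theorem in finite-dimensional subspaces\<close>

definition orthonormal_upto :: "nat \<Rightarrow> (nat \<Rightarrow> 'v::real_inner) \<Rightarrow> bool" where
  "orthonormal_upto n e \<longleftrightarrow> (\<forall>i<n. \<forall>j<n. inner (e i) (e j) = (if i = j then 1 else 0))"

lemma orthonormal_inner_sum:
  assumes "orthonormal_upto n e" "j < n"
  shows "inner (e j) (\<Sum>i<n. c i *\<^sub>R e i) = c j"
proof -
  have "inner (e j) (\<Sum>i<n. c i *\<^sub>R e i) = (\<Sum>i<n. c i * inner (e j) (e i))"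
    by (simp add: inner_sum_right)
  also have "\<dots> = (\<Sum>i<n. if i = j then c i else 0)"
    using assms by (intro sum.cong) (auto simp: orthonormal_upto_def)
  finally show ?thesis using assms(2) by simp
qed

lemma orthonormal_norm_sum:
  assumes "orthonormal_upto n e"
  shows "(norm (\<Sum>i<n. c i *\<^sub>R e i))\<^sup>2 = (\<Sum>i<n. (c i)\<^sup>2)"
  unfolding power2_norm_eq_inner
  by (simp add: inner_sum_left orthonormal_inner_sum[OF assms] power2_eq_square)

lemma orthogonal_to_spanning_set_eq_0:
  fixes d :: "'v::real_inner"
  assumes "\<And>y. y \<in> S \<Longrightarrow> inner d y = 0" "d \<in> span S"
  shows "d = 0"
proof -
  have "subspace {y. inner d y = 0}" unfolding subspace_def by (auto simp: inner_add_right)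
  then have "span S \<subseteq> {y. inner d y = 0}" using assms(1) by (intro span_minimal) auto
  then show ?thesis using assms(2) by auto
qed

lemma orthonormal_expansion:
  assumes ON: "orthonormal_upto n e" and x: "x \<in> span (e ` {..<n})"
  shows "x = (\<Sum>i<n. inner (e i) x *\<^sub>R e i)"
proof -
  define d where "d = x - (\<Sum>i<n. inner (e i) x *\<^sub>R e i)"
  have "d \<in> span (e ` {..<n})" unfolding d_def using x
    by (intro span_diff span_sum span_scale) (auto intro: span_base)
  moreover have "inner d (e j) = 0" if "j < n" for j
    using orthonormal_inner_sum[OF ON that, of "\<lambda>i. inner (e i) x"]
    by (simp add: d_def inner_diff_right inner_commute[of _ "e j"])
  ultimately have "d = 0" by (intro orthogonal_to_spanning_set_eq_0[of "e ` {..<n}"]) auto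
  then show ?thesis by (simp add: d_def)
qed

lemma span_insert_scale:
  fixes x :: "'v::real_vector"
  assumes "c \<noteq> 0"
  shows "span (insert (c *\<^sub>R x) S) = span (insert x S)"
  unfolding span_insert
proof (intro Collect_cong iffI; elim exE)
  fix y k assume "y - k *\<^sub>R c *\<^sub>R x \<in> span S"
  then show "\<exists>k. y - k *\<^sub>R x \<in> span S" by (intro exI[of _ "k * c"]) simp
next
  fix y k assume "y - k *\<^sub>R x \<in> span S"
  then show "\<exists>k. y - k *\<^sub>R c *\<^sub>R x \<in> span S" using assms by (intro exI[of _ "k / c"]) simp
qed

lemma span_insert_cong: "span S = span T \<Longrightarrow> span (insert a S) = span (insert a T)"
  by (simp add: span_insert)

lemma orthonormal_extend:
  assumes ON: "orthonormal_upto n e" and a: "a \<notin> span (e ` {..<n})"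
  defines "a' \<equiv> a - (\<Sum>i<n. inner (e i) a *\<^sub>R e i)"
  shows "orthonormal_upto (Suc n) (e(n := a' /\<^sub>R norm a'))"
    and "span ((e(n := a' /\<^sub>R norm a')) ` {..<Suc n}) = span (insert a (e ` {..<n}))"
proof -
  have diff: "a - a' \<in> span (e ` {..<n})"
    unfolding a'_def by (simp, intro span_sum span_scale span_base) auto
  then have a'0: "a' \<noteq> 0" using a by auto
  have orth: "inner (e j) a' = 0" if "j < n" for j
    unfolding a'_def using orthonormal_inner_sum[OF ON that] by (simp add: inner_diff_right)
  show "orthonormal_upto (Suc n) (e(n := a' /\<^sub>R norm a'))"
  proof -
    have "inner (a' /\<^sub>R norm a') (a' /\<^sub>R norm a') = 1"
      using a'0 by (simp add: power2_norm_eq_inner[symmetric] power2_eq_square)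
    then show ?thesis
      using ON orth by (auto simp: orthonormal_upto_def less_Suc_eq inner_commute)
  qed
  have "(e(n := a' /\<^sub>R norm a')) ` {..<Suc n} = insert (a' /\<^sub>R norm a') (e ` {..<n})"
    by (auto simp: lessThan_Suc image_def)
  also have "span \<dots> = span (insert a' (e ` {..<n}))"
    using a'0 by (intro span_insert_scale) simp
  also have "\<dots> = span (insert a (e ` {..<n}))"
    using diff by (intro eq_span_insert_eq) (metis minus_diff_eq span_neg)
  finally show "span ((e(n := a' /\<^sub>R norm a')) ` {..<Suc n}) = span (insert a (e ` {..<n}))" .
qed

lemma orthonormal_basis_exists:
  fixes N :: "'v::real_inner set"
  assumes "finite N"
  obtains n e where "orthonormal_upto n e" "span (e ` {..<n}) = span N"
  using assms
proof (induction arbitrary: thesis rule: finite_induct)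
  case empty
  show ?case by (rule empty.prems[of 0]) (auto simp: orthonormal_upto_def)
next
  case (insert a N)
  obtain n e where ON: "orthonormal_upto n e" and sp: "span (e ` {..<n}) = span N"
    using insert.IH by blast
  show ?case
  proof (cases "a \<in> span (e ` {..<n})")
    case True
    then show ?thesis
      using insert.prems[OF ON] sp span_redundant span_insert_cong by (metis span_span)
  next
    case False
    from orthonormal_extend[OF ON False] show ?thesis
      using insert.prems span_insert_cong[OF sp] by metis
  qed
qed

definition orthonormal_coords :: "nat \<Rightarrow> (nat \<Rightarrow> 'v::real_inner) \<Rightarrow> 'v \<Rightarrow> nat \<Rightarrow> real" where
  "orthonormal_coords k e x = (\<lambda>i. if i \<le> k then inner (e i) x else 0)"

definition orthonormal_comb :: "nat \<Rightarrow> (nat \<Rightarrow> 'v::real_inner) \<Rightarrow> (nat \<Rightarrow> real) \<Rightarrow> 'v" where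
  "orthonormal_comb k e y = (\<Sum>i<Suc k. y i *\<^sub>R e i)"

context
  fixes k :: nat and e :: "nat \<Rightarrow> 'v::real_inner"
  assumes ON: "orthonormal_upto (Suc k) e"
begin

lemma orthonormal_comb_coords:
  "x \<in> span (e ` {..<Suc k}) \<Longrightarrow> orthonormal_comb k e (orthonormal_coords k e x) = x"
  using orthonormal_expansion[OF ON]
  by (simp add: orthonormal_comb_def orthonormal_coords_def less_Suc_eq_le)

lemma orthonormal_coords_comb:
  "y \<in> topspace (nsphere k) \<Longrightarrow> orthonormal_coords k e (orthonormal_comb k e y) = y"
  using orthonormal_inner_sum[OF ON]
  by (auto simp: orthonormal_coords_def orthonormal_comb_def nsphere fun_eq_iff)

lemma norm_orthonormal_comb: "(norm (orthonormal_comb k e y))\<^sup>2 = (\<Sum>i\<le>k. (y i)\<^sup>2)"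
  unfolding orthonormal_comb_def orthonormal_norm_sum[OF ON] by (simp add: lessThan_Suc_atMost)

lemma continuous_map_orthonormal_coords:
  "continuous_map (top_of_set (span (e ` {..<Suc k}) \<inter> sphere 0 1)) (nsphere k)
     (orthonormal_coords k e)"
  unfolding nsphere continuous_map_in_subtopology
proof
  show "continuous_map (top_of_set (span (e ` {..<Suc k}) \<inter> sphere 0 1)) (powertop_real UNIV)
      (orthonormal_coords k e)"
    unfolding continuous_map_componentwise_UNIV
    by (auto simp: orthonormal_coords_def intro!: continuous_intros)
  have "(\<Sum>i\<le>k. (orthonormal_coords k e x i)\<^sup>2) = (norm x)\<^sup>2" if "x \<in> span (e ` {..<Suc k})" for x
    using norm_orthonormal_comb[of "orthonormal_coords k e x"] orthonormal_comb_coords[OF that]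
    by simp
  then show "orthonormal_coords k e \<in> topspace (top_of_set (span (e ` {..<Suc k}) \<inter> sphere 0 1))
      \<rightarrow> {x. (\<Sum>i\<le>k. (x i)\<^sup>2) = 1 \<and> (\<forall>i>k. x i = 0)}"
    by (auto simp: orthonormal_coords_def)
qed

lemma continuous_map_orthonormal_comb:
  "continuous_map (nsphere k) (top_of_set (span (e ` {..<Suc k}) \<inter> sphere 0 1))
     (orthonormal_comb k e)"
  unfolding continuous_map_in_subtopology
proof
  have "continuous_map (nsphere k) euclidean (\<lambda>y. y i *\<^sub>R e i)" for i
    using continuous_map_compose[OF continuous_map_nsphere_projection[of k i],
        of euclidean "\<lambda>t. t *\<^sub>R e i"]
    by (simp add: o_def continuous_intros)
  then show "continuous_map (nsphere k) euclidean (orthonormal_comb k e)"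
    unfolding orthonormal_comb_def by (intro continuous_map_sum) auto
  have "orthonormal_comb k e y \<in> sphere 0 1" if "y \<in> topspace (nsphere k)" for y
  proof -
    have "norm (orthonormal_comb k e y) = 1 \<or> norm (orthonormal_comb k e y) = -1"
      using norm_orthonormal_comb[of y] that by (simp add: nsphere power2_eq_1_iff)
    with norm_ge_zero[of "orthonormal_comb k e y"] have "norm (orthonormal_comb k e y) = 1"
      by linarith
    then show ?thesis by simp
  qed
  moreover have "orthonormal_comb k e y \<in> span (e ` {..<Suc k})" for y
    unfolding orthonormal_comb_def by (intro span_sum span_scale span_base) auto
  ultimately show "orthonormal_comb k e \<in> topspace (nsphere k)
      \<rightarrow> span (e ` {..<Suc k}) \<inter> sphere 0 1"
    by auto
qed

lemma span_sphere_homeomorphic_nsphere: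
  "top_of_set (span (e ` {..<Suc k}) \<inter> sphere 0 1) homeomorphic_space nsphere k"
  unfolding homeomorphic_space_def homeomorphic_maps_def
  using continuous_map_orthonormal_coords continuous_map_orthonormal_comb
    orthonormal_comb_coords orthonormal_coords_comb by auto

end

text \<open>The point where the ray from \<open>x\<close> in direction \<open>v\<close> leaves the unit ball: \<open>t\<close> is the
  nonnegative root of \<open>|x + t v|\<^sup>2 = 1\<close>.\<close>

lemma ray_exit_unit_sphere:
  fixes x v :: "'v::real_inner"
  assumes x: "norm x \<le> 1" and v: "v \<noteq> 0"
  defines "t \<equiv> (sqrt ((inner x v)\<^sup>2 + inner v v * (1 - inner x x)) - inner x v) / inner v v"
  shows "norm (x + t *\<^sub>R v) = 1"
    and "norm x = 1 \<Longrightarrow> inner x v \<ge> 0 \<Longrightarrow> t = 0"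
proof -
  let ?a = "inner v v" and ?b = "inner x v" and ?c = "1 - inner x x"
  let ?s = "sqrt (?b\<^sup>2 + ?a * ?c)"
  have a: "?a > 0" using v by simp
  have "?c \<ge> 0" using x power_le_one[of "norm x" 2] by (simp add: power2_norm_eq_inner)
  then have s2: "?s\<^sup>2 = ?b\<^sup>2 + ?a * ?c" using a by simp
  have "inner (x + t *\<^sub>R v) (x + t *\<^sub>R v) = inner x x + (2 * t * ?b + t\<^sup>2 * ?a)"
    by (simp add: inner_add_left inner_add_right inner_commute power2_eq_square algebra_simps)
  also have "2 * t * ?b + t\<^sup>2 * ?a = ((?s - ?b)\<^sup>2 + 2 * ?b * (?s - ?b)) / ?a"
    using a by (simp add: t_def power2_eq_square field_simps)
  also have "\<dots> = (?s\<^sup>2 - ?b\<^sup>2) / ?a" by (simp add: power2_eq_square algebra_simps)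
  also have "\<dots> = ?c" using a s2 by simp
  finally have "inner (x + t *\<^sub>R v) (x + t *\<^sub>R v) = 1" by simp
  then show "norm (x + t *\<^sub>R v) = 1" by (simp add: norm_eq_sqrt_inner)
  assume "norm x = 1" "?b \<ge> 0"
  then show "t = 0" by (simp add: t_def power2_norm_eq_inner[symmetric])
qed

text \<open>Brouwer's theorem for the unit ball of a finite-dimensional subspace, via the
  non-contractibility of spheres: a fixed-point-free map would give a retraction of the
  ball onto its boundary sphere.\<close>

lemma brouwer_span_unit_ball:
  fixes e :: "nat \<Rightarrow> 'v::real_inner"
  assumes ON: "orthonormal_upto (Suc k) e"
    and hc: "continuous_on (span (e ` {..<Suc k}) \<inter> cball 0 1) h"
    and hi: "h ` (span (e ` {..<Suc k}) \<inter> cball 0 1) \<subseteq> span (e ` {..<Suc k}) \<inter> cball 0 1"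
  obtains x where "x \<in> span (e ` {..<Suc k}) \<inter> cball 0 1" "h x = x"
proof (rule ccontr)
  note fixpoint = that
  assume "\<not> thesis"
  then have nofix: "h x \<noteq> x" if "x \<in> span (e ` {..<Suc k}) \<inter> cball 0 1" for x
    using fixpoint that by blast
  let ?F = "span (e ` {..<Suc k})"
  let ?B = "?F \<inter> cball 0 1" and ?S = "?F \<inter> sphere 0 1"
  define v where "v x = x - h x" for x
  define t where "t x = (sqrt ((inner x (v x))\<^sup>2 + inner (v x) (v x) * (1 - inner x x))
      - inner x (v x)) / inner (v x) (v x)" for x
  define r where "r x = x + t x *\<^sub>R v x" for x
  have v0: "v x \<noteq> 0" if "x \<in> ?B" for x using nofix[OF that] by (simp add: v_def)
  have rS: "r x \<in> ?S" if "x \<in> ?B" for x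
  proof
    show "r x \<in> ?F" using that hi unfolding r_def v_def
      by (intro span_add span_scale span_diff) auto
    show "r x \<in> sphere 0 1"
      using ray_exit_unit_sphere(1)[of x "v x"] that v0[OF that] by (simp add: r_def t_def)
  qed
  have rid: "r x = x" if "x \<in> ?S" for x
  proof -
    have "x \<in> ?B" using that by auto
    then have "h x \<in> cball 0 1" using hi by blast
    then have "norm (h x) \<le> 1" by simp
    then have "inner x (h x) \<le> inner x x"
      using norm_cauchy_schwarz[of x "h x"] that by (simp add: power2_norm_eq_inner[symmetric])
    then have "t x = 0"
      using ray_exit_unit_sphere(2)[of x "v x"] that v0[of x]
      by (simp add: t_def v_def inner_diff_right)
    then show ?thesis by (simp add: r_def)
  qed
  have "continuous_on ?B v" unfolding v_def by (intro continuous_intros hc)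
  then have "continuous_on ?B r"
    unfolding r_def t_def using v0 by (intro continuous_intros) auto
  then have "retraction_map (top_of_set ?B) (top_of_set ?S) r"
    unfolding retraction_map_def retraction_maps_def using rS rid
    by (intro exI[of _ id]) auto
  moreover have "contractible_space (top_of_set ?B)"
    by (simp add: convex_imp_contractible convex_Int subspace_imp_convex convex_cball)
  ultimately have "contractible_space (top_of_set ?S)"
    by (rule contractible_space_retraction_map_image)
  then have "contractible_space (nsphere k)"
    using homeomorphic_space_contractibility[OF span_sphere_homeomorphic_nsphere[OF ON]] by blast
  then show False using non_contractible_space_nsphere by blast
qed

theorem brouwer_convex_hull:
  fixes N :: "'v::{real_inner,complete_space} set"
  assumes N: "finite N" "N \<noteq> {}" and gc: "continuous_on (convex hull N) g"
    and gi: "g ` (convex hull N) \<subseteq> convex hull N"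
  obtains x where "x \<in> convex hull N" "g x = x"
proof -
  let ?P = "convex hull N"
  obtain n e where ON: "orthonormal_upto n e" and sp: "span (e ` {..<n}) = span N"
    using orthonormal_basis_exists[OF N(1)] by blast
  have P: "closed ?P" "convex ?P" "?P \<noteq> {}" "compact ?P"
    using N finite_imp_compact_convex_hull compact_imp_closed by auto
  have PF: "?P \<subseteq> span N" by (rule convex_hull_subset_span)
  show thesis
  proof (cases n)
    case 0
    then have "?P \<subseteq> {0}" using sp PF by simp
    then have "?P = {0}" using P(3) by blast
    then show thesis using gi that by auto
  next
    case (Suc k)
    obtain R where R: "R > 0" "\<And>x. x \<in> ?P \<Longrightarrow> norm x \<le> R"
      using compact_imp_bounded[OF P(4)] bounded_pos by blast
    let ?F = "span (e ` {..<Suc k})"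
    let ?B = "?F \<inter> cball 0 1"
    define h where "h x = (1 / R) *\<^sub>R g (convex_proj ?P (R *\<^sub>R x))" for x
    have proj: "convex_proj ?P y \<in> ?P" for y using convex_proj_in[OF P(1-3)] .
    have "continuous_on ?B (\<lambda>x. convex_proj ?P (R *\<^sub>R x))"
      by (intro continuous_on_compose2[OF continuous_on_convex_proj[OF P(1-3)]]
          continuous_intros) auto
    then have hc: "continuous_on ?B h"
      unfolding h_def using proj
      by (intro continuous_intros continuous_on_compose2[OF gc]) auto
    have hi: "h ` ?B \<subseteq> ?B"
    proof clarify
      fix x
      have gP: "g (convex_proj ?P (R *\<^sub>R x)) \<in> ?P" using gi proj by blast
      then have "h x \<in> ?F" using PF sp Suc unfolding h_def by (intro span_scale) auto
      moreover have "norm (h x) \<le> 1" using R gP unfolding h_def by (simp add: field_simps)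
      ultimately show "h x \<in> ?B" by simp
    qed
    obtain x where x: "x \<in> ?B" "h x = x"
      using brouwer_span_unit_ball[OF ON[unfolded Suc] hc hi] by blast
    define y where "y = R *\<^sub>R x"
    have "g (convex_proj ?P y) = y" using x(2) R unfolding h_def y_def
      by (metis divideR_right less_numeral_extra(3) scaleR_one divide_inverse_commute
          inverse_eq_divide mult_1 scaleR_scaleR)
    then have "y \<in> ?P" using gi proj by (metis image_subset_iff)
    with \<open>g (convex_proj ?P y) = y\<close> show thesis
      using that convex_proj_self[OF P(1,2)] by metis
  qed
qed

section \<open>Fixed points of weakly sequentially continuous maps\<close>

text \<open>For bounded \<open>e\<close>, this seminorm turns weak convergence of bounded sequences into
  convergence, and it vanishes exactly on the orthogonal complement of \<open>range e\<close>.\<close>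

definition weak_seminorm :: "(nat \<Rightarrow> 'v::real_inner) \<Rightarrow> 'v \<Rightarrow> real" where
  "weak_seminorm e z = suminf (\<lambda>k. (1/2)^k * \<bar>inner (e k) z\<bar>)"

context
  fixes e :: "nat \<Rightarrow> 'v::real_inner" and R :: real
  assumes e_bound: "\<And>k. norm (e k) \<le> R"
begin

lemma weak_seminorm_term_le: "(1/2)^k * \<bar>inner (e k) z\<bar> \<le> R * norm z * (1/2)^k"
proof -
  have "\<bar>inner (e k) z\<bar> \<le> R * norm z"
    using Cauchy_Schwarz_ineq2[of "e k" z] e_bound[of k] by (meson mult_right_mono norm_ge_zero order_trans)
  then show ?thesis by (simp add: mult.commute)
qed

lemma weak_seminorm_summable: "summable (\<lambda>k. (1/2)^k * \<bar>inner (e k) z\<bar>)"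
  by (rule summable_comparison_test[OF _ summable_mult[OF summable_geometric, of "1/2" "R * norm z"]])
    (use weak_seminorm_term_le in auto)

lemma weak_seminorm_nonneg: "weak_seminorm e z \<ge> 0"
  unfolding weak_seminorm_def by (intro suminf_nonneg weak_seminorm_summable) auto

lemma weak_seminorm_triangle: "weak_seminorm e (a + b) \<le> weak_seminorm e a + weak_seminorm e b"
proof -
  have "weak_seminorm e (a + b)
      \<le> suminf (\<lambda>k. (1/2)^k * \<bar>inner (e k) a\<bar> + (1/2)^k * \<bar>inner (e k) b\<bar>)"
    unfolding weak_seminorm_def
    by (intro suminf_le summable_add weak_seminorm_summable)
      (simp add: inner_add_right distrib_left[symmetric] abs_triangle_ineq)
  also have "\<dots> = weak_seminorm e a + weak_seminorm e b"
    unfolding weak_seminorm_def by (intro suminf_add[symmetric] weak_seminorm_summable)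
  finally show ?thesis .
qed

lemma weak_seminorm_scaleR: "weak_seminorm e (c *\<^sub>R a) = \<bar>c\<bar> * weak_seminorm e a"
proof -
  have "weak_seminorm e (c *\<^sub>R a) = suminf (\<lambda>k. \<bar>c\<bar> * ((1/2)^k * \<bar>inner (e k) a\<bar>))"
    unfolding weak_seminorm_def by (simp add: abs_mult mult.left_commute)
  also have "\<dots> = \<bar>c\<bar> * weak_seminorm e a"
    unfolding weak_seminorm_def by (intro suminf_mult weak_seminorm_summable)
  finally show ?thesis .
qed

lemma weak_seminorm_minus_commute: "weak_seminorm e (a - b) = weak_seminorm e (b - a)"
  using weak_seminorm_scaleR[of "-1" "a - b"] by simp

lemma weak_seminorm_triangle_diff: "weak_seminorm e (a - b) \<le> weak_seminorm e a + weak_seminorm e b"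
  using weak_seminorm_triangle[of a "- b"] weak_seminorm_scaleR[of "-1" b] by simp

lemma weak_seminorm_sum:
  "finite A \<Longrightarrow> weak_seminorm e (sum f A) \<le> (\<Sum>i\<in>A. weak_seminorm e (f i))"
proof (induction rule: finite_induct)
  case empty
  then show ?case using weak_seminorm_scaleR[of 0 0] by simp
next
  case (insert x A)
  then show ?case using weak_seminorm_triangle[of "f x" "sum f A"] by simp
qed

lemma weak_seminorm_eq_0_imp_orthogonal:
  assumes "weak_seminorm e z = 0" shows "inner (e k) z = 0"
  using suminf_eq_zero_iff[OF weak_seminorm_summable[of z]] assms
  unfolding weak_seminorm_def by simp

lemma weak_seminorm_le_head_plus_tail:
  "weak_seminorm e z \<le> (\<Sum>k<N. (1/2)^k * \<bar>inner (e k) z\<bar>) + 2 * R * norm z * (1/2)^N"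
proof -
  have "weak_seminorm e z = suminf (\<lambda>i. (1/2)^(i + N) * \<bar>inner (e (i + N)) z\<bar>)
      + (\<Sum>k<N. (1/2)^k * \<bar>inner (e k) z\<bar>)"
    unfolding weak_seminorm_def by (rule suminf_split_initial_segment[OF weak_seminorm_summable])
  moreover have "suminf (\<lambda>i. (1/2)^(i + N) * \<bar>inner (e (i + N)) z\<bar>) \<le> suminf (\<lambda>i. R * norm z * (1/2)^N * (1/2)^i)"
    using weak_seminorm_term_le[of "_ + N" z]
    by (intro suminf_le summable_ignore_initial_segment[OF weak_seminorm_summable] summable_mult
        summable_geometric) (auto simp: power_add mult_ac)
  moreover have "suminf (\<lambda>i. R * norm z * (1/2)^N * (1/2::real)^i) = 2 * R * norm z * (1/2)^N"
    using suminf_mult[OF summable_geometric[of "1/2::real"], of "R * norm z * (1/2)^N"]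
      suminf_geometric[of "1/2::real"] by simp
  ultimately show ?thesis by linarith
qed

lemma weak_seminorm_tendsto_0:
  assumes M: "\<And>n. norm (z n) \<le> M" and w: "weak_conv z 0"
  shows "(\<lambda>n. weak_seminorm e (z n)) \<longlonglongrightarrow> 0"
proof (rule order_tendstoI)
  fix a :: real assume "a < 0"
  then show "\<forall>\<^sub>F n in sequentially. a < weak_seminorm e (z n)"
    using weak_seminorm_nonneg less_le_trans by (intro always_eventually allI) blast
next
  fix \<epsilon> :: real assume \<epsilon>: "\<epsilon> > 0"
  have RM: "R \<ge> 0" "M \<ge> 0"
    using e_bound[of 0] M[of 0] norm_ge_zero order_trans by blast+
  define C where "C = 2 * R * M + 1"
  have "2 * R * M \<ge> 0" using RM by simp
  then have C: "C > 0" unfolding C_def by linarith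
  obtain N where N: "(1/2::real)^N < \<epsilon> / (2 * C)"
    using real_arch_pow_inv[of "\<epsilon> / (2 * C)" "1/2::real"] \<epsilon> C by auto
  have tail: "2 * R * norm (z n) * (1/2)^N \<le> \<epsilon> / 2" for n
  proof -
    have "R * norm (z n) \<le> R * M" using M[of n] RM by (intro mult_left_mono) auto
    then have "2 * R * norm (z n) * (1/2)^N \<le> C * (1/2)^N"
      by (intro mult_right_mono) (auto simp: C_def)
    also have "\<dots> \<le> C * (\<epsilon> / (2 * C))" using N C by (intro mult_left_mono) auto
    finally show ?thesis using C by simp
  qed
  have "(\<lambda>n. inner (e k) (z n)) \<longlonglongrightarrow> 0" for k
    using w[unfolded weak_conv_def, rule_format, OF bounded_linear_inner_right] by simp
  then have "(\<lambda>n. \<Sum>k<N. (1/2)^k * \<bar>inner (e k) (z n)\<bar>) \<longlonglongrightarrow> (\<Sum>k<N. 0)"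
    by (intro tendsto_sum tendsto_mult_right_zero tendsto_rabs_zero)
  then have "\<forall>\<^sub>F n in sequentially. (\<Sum>k<N. (1/2)^k * \<bar>inner (e k) (z n)\<bar>) < \<epsilon> / 2"
    using \<epsilon> by (intro order_tendstoD) auto
  then show "\<forall>\<^sub>F n in sequentially. weak_seminorm e (z n) < \<epsilon>"
  proof eventually_elim
    case (elim n)
    then show ?case using weak_seminorm_le_head_plus_tail[of "z n" N] tail[of n] by linarith
  qed
qed

lemma tendsto_weak_seminorm:
  assumes M: "\<And>n. norm (z n) \<le> M" and w: "weak_conv z l"
  shows "(\<lambda>n. weak_seminorm e (z n)) \<longlonglongrightarrow> weak_seminorm e l"
proof -
  have "norm (z n - l) \<le> M + norm l" for n
    using M[of n] norm_triangle_ineq4[of "z n" l] by linarith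
  then have lim0: "(\<lambda>n. weak_seminorm e (z n - l)) \<longlonglongrightarrow> 0"
    by (rule weak_seminorm_tendsto_0[OF _ weak_conv_diff_limit[OF w]])
  have "\<bar>weak_seminorm e (z n) - weak_seminorm e l\<bar> \<le> weak_seminorm e (z n - l)" for n
  proof -
    have "weak_seminorm e (z n) \<le> weak_seminorm e (z n - l) + weak_seminorm e l"
      using weak_seminorm_triangle[of "z n - l" l] by simp
    moreover have "weak_seminorm e l \<le> weak_seminorm e (z n) + weak_seminorm e (z n - l)"
      using weak_seminorm_triangle[of "z n" "l - z n"] weak_seminorm_minus_commute[of "z n" l]
      by simp
    ultimately show ?thesis unfolding abs_le_iff by linarith
  qed
  then have "\<forall>\<^sub>F n in sequentially.
      norm (weak_seminorm e (z n) - weak_seminorm e l) \<le> weak_seminorm e (z n - l)"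
    by simp
  from Lim_null_comparison[OF this lim0] show ?thesis by (rule LIM_zero_cancel)
qed

end

definition schauder_weight :: "(nat \<Rightarrow> 'v::real_inner) \<Rightarrow> real \<Rightarrow> 'v \<Rightarrow> 'v \<Rightarrow> real" where
  "schauder_weight e \<epsilon> y p = max 0 (\<epsilon> - weak_seminorm e (y - p))"

definition schauder_proj :: "(nat \<Rightarrow> 'v::real_inner) \<Rightarrow> real \<Rightarrow> 'v set \<Rightarrow> 'v \<Rightarrow> 'v" where
  "schauder_proj e \<epsilon> N y =
     (\<Sum>p\<in>N. (schauder_weight e \<epsilon> y p / (\<Sum>q\<in>N. schauder_weight e \<epsilon> y q)) *\<^sub>R p)"

context
  fixes e :: "nat \<Rightarrow> 'v::real_inner" and R :: real
  assumes e_bound: "\<And>k. norm (e k) \<le> R"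
begin

lemma schauder_weight_sum_pos:
  assumes "finite N" "p \<in> N" "weak_seminorm e (y - p) < \<epsilon>"
  shows "(\<Sum>q\<in>N. schauder_weight e \<epsilon> y q) > 0"
  using assms by (intro sum_pos2[of _ p]) (auto simp: schauder_weight_def)

lemma schauder_proj_in_convex_hull:
  assumes N: "finite N" "p \<in> N" "weak_seminorm e (y - p) < \<epsilon>"
  shows "schauder_proj e \<epsilon> N y \<in> convex hull N"
proof -
  let ?w = "\<lambda>q. schauder_weight e \<epsilon> y q / (\<Sum>q\<in>N. schauder_weight e \<epsilon> y q)"
  have pos: "(\<Sum>q\<in>N. schauder_weight e \<epsilon> y q) > 0" by (rule schauder_weight_sum_pos[OF N])
  then have "sum ?w N = 1" by (simp add: sum_divide_distrib[symmetric])
  moreover have "\<forall>q\<in>N. 0 \<le> ?w q" using pos by (simp add: schauder_weight_def)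
  ultimately show ?thesis
    unfolding convex_hull_finite[OF N(1)] schauder_proj_def mem_Collect_eq
    by (intro exI[of _ ?w]) simp
qed

lemma schauder_proj_close:
  assumes N: "finite N" "p \<in> N" "weak_seminorm e (y - p) < \<epsilon>"
  shows "weak_seminorm e (schauder_proj e \<epsilon> N y - y) \<le> \<epsilon>"
proof -
  define w where "w q = schauder_weight e \<epsilon> y q / (\<Sum>q\<in>N. schauder_weight e \<epsilon> y q)" for q
  have pos: "(\<Sum>q\<in>N. schauder_weight e \<epsilon> y q) > 0" by (rule schauder_weight_sum_pos[OF N])
  then have w1: "sum w N = 1" by (simp add: w_def sum_divide_distrib[symmetric])
  have w0: "w q \<ge> 0" for q using pos by (simp add: w_def schauder_weight_def)
  have "schauder_proj e \<epsilon> N y - y = (\<Sum>q\<in>N. w q *\<^sub>R (q - y))"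
    using w1 by (simp add: schauder_proj_def w_def[symmetric] scaleR_diff_right sum_subtractf
        flip: scaleR_sum_left)
  then have "weak_seminorm e (schauder_proj e \<epsilon> N y - y) \<le> (\<Sum>q\<in>N. weak_seminorm e (w q *\<^sub>R (q - y)))"
    using weak_seminorm_sum[where e=e and R=R, OF e_bound N(1)] by simp
  also have "\<dots> = (\<Sum>q\<in>N. w q * weak_seminorm e (q - y))"
    using weak_seminorm_scaleR[where e=e and R=R, OF e_bound] w0 by simp
  also have "\<dots> \<le> (\<Sum>q\<in>N. w q * \<epsilon>)"
  proof (rule sum_mono)
    fix q
    show "w q * weak_seminorm e (q - y) \<le> w q * \<epsilon>"
    proof (cases "weak_seminorm e (y - q) < \<epsilon>")
      case True
      then show ?thesis
        using w0[of q] weak_seminorm_minus_commute[where e=e and R=R, OF e_bound, of q y] by (simp add: mult_left_mono)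
    next
      case False
      then show ?thesis by (simp add: w_def schauder_weight_def)
    qed
  qed
  also have "\<dots> = \<epsilon>" using w1 by (simp add: sum_distrib_right[symmetric])
  finally show ?thesis .
qed

lemma tendsto_schauder_proj:
  assumes N: "finite N" "p \<in> N" "weak_seminorm e (y - p) < \<epsilon>"
    and lim: "\<And>q. (\<lambda>n. weak_seminorm e (x n - q)) \<longlonglongrightarrow> weak_seminorm e (y - q)"
  shows "(\<lambda>n. schauder_proj e \<epsilon> N (x n)) \<longlonglongrightarrow> schauder_proj e \<epsilon> N y"
proof -
  have w: "(\<lambda>n. schauder_weight e \<epsilon> (x n) q) \<longlonglongrightarrow> schauder_weight e \<epsilon> y q" for q
    unfolding schauder_weight_def by (intro tendsto_max tendsto_diff tendsto_const lim)
  have S: "(\<lambda>n. \<Sum>q\<in>N. schauder_weight e \<epsilon> (x n) q) \<longlonglongrightarrow> (\<Sum>q\<in>N. schauder_weight e \<epsilon> y q)"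
    by (rule tendsto_sum[OF w])
  have nz: "(\<Sum>q\<in>N. schauder_weight e \<epsilon> y q) \<noteq> 0"
    using schauder_weight_sum_pos[OF N] by simp
  show ?thesis
    unfolding schauder_proj_def
    by (rule tendsto_sum) (rule tendsto_scaleR[OF tendsto_divide[OF w S nz] tendsto_const])
qed

end

definition weakly_seq_continuous_on :: "'v::real_normed_vector set \<Rightarrow> ('v \<Rightarrow> 'v) \<Rightarrow> bool" where
  "weakly_seq_continuous_on D F \<longleftrightarrow>
     (\<forall>x y. (\<forall>n. x n \<in> D) \<longrightarrow> y \<in> D \<longrightarrow> weak_conv x y \<longrightarrow> weak_conv (\<lambda>n. F (x n)) (F y))"

lemma weakly_seq_continuous_onD:
  "weakly_seq_continuous_on D F \<Longrightarrow> (\<And>n. x n \<in> D) \<Longrightarrow> y \<in> D \<Longrightarrow> weak_conv x y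
    \<Longrightarrow> weak_conv (\<lambda>n. F (x n)) (F y)"
  unfolding weakly_seq_continuous_on_def by blast

text \<open>Starting from \<open>d\<close>, close up under \<open>F\<close> and under convex combinations with rational
  weights; the union over all stages is countable, and its closure is convex and
  \<open>F\<close>-invariant.\<close>

fun rat_hull_iter :: "('v::real_vector \<Rightarrow> 'v) \<Rightarrow> 'v \<Rightarrow> nat \<Rightarrow> 'v set" where
  "rat_hull_iter F d 0 = {d}"
| "rat_hull_iter F d (Suc k) = rat_hull_iter F d k \<union> F ` rat_hull_iter F d k \<union>
     (\<lambda>(q, r, t). (1 - t) *\<^sub>R q + t *\<^sub>R r) ` (rat_hull_iter F d k \<times> rat_hull_iter F d k \<times> (\<rat> \<inter> {0..1}))"

lemma rat_hull_iter_mono: "k \<le> l \<Longrightarrow> rat_hull_iter F d k \<subseteq> rat_hull_iter F d l"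
  by (rule lift_Suc_mono_le[of "rat_hull_iter F d"]) auto

lemma countable_rat_hull_iter: "countable (rat_hull_iter F d k)"
proof (induction k)
  case (Suc k)
  have "countable (\<rat> \<inter> {0..1::real})" using countable_rat by (rule countable_subset[rotated]) auto
  then show ?case using Suc by (simp add: countable_SIGMA)
qed simp

lemma rat_hull_iter_subset:
  assumes "d \<in> D" "F ` D \<subseteq> D" "convex D" shows "rat_hull_iter F d k \<subseteq> D"
proof (induction k)
  case (Suc k)
  have "(1 - t) *\<^sub>R q + t *\<^sub>R r \<in> D" if "q \<in> D" "r \<in> D" "0 \<le> t" "t \<le> 1" for q r t
    using convexD[OF assms(3) that(1,2), of "1 - t" t] that(3,4) by simp
  then have "(\<lambda>(q, r, t). (1 - t) *\<^sub>R q + t *\<^sub>R r) ` (rat_hull_iter F d k \<times> rat_hull_iter F d k \<times> (\<rat> \<inter> {0..1})) \<subseteq> D"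
    using Suc by force
  moreover have "F ` rat_hull_iter F d k \<subseteq> D" using Suc assms(2) by blast
  ultimately show ?case using Suc by simp
qed (use assms in simp)

lemma rat_unit_interval_approx:
  fixes u :: real assumes "0 \<le> u" "u \<le> 1"
  obtains t where "\<And>n. t n \<in> \<rat>" "\<And>n. 0 \<le> t n" "\<And>n. t n \<le> 1" "t \<longlonglongrightarrow> u"
proof -
  define t where "t n = of_int \<lfloor>u * real (Suc n)\<rfloor> / real (Suc n)" for n
  have 1: "t n \<in> \<rat>" for n unfolding t_def by (intro Rats_divide Rats_of_int Rats_of_nat)
  have fl: "u * real (Suc n) - 1 < of_int \<lfloor>u * real (Suc n)\<rfloor>" "of_int \<lfloor>u * real (Suc n)\<rfloor> \<le> u * real (Suc n)" for n
    by linarith+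
  have lo: "u - 1 / real (Suc n) \<le> t n" for n
  proof -
    have "(u * real (Suc n) - 1) / real (Suc n) \<le> of_int \<lfloor>u * real (Suc n)\<rfloor> / real (Suc n)"
      by (intro divide_right_mono) (use fl(1)[of n] in auto)
    then show ?thesis by (simp add: t_def diff_divide_distrib)
  qed
  have hi: "t n \<le> u" for n
  proof -
    have "of_int \<lfloor>u * real (Suc n)\<rfloor> / real (Suc n) \<le> (u * real (Suc n)) / real (Suc n)"
      by (intro divide_right_mono) (use fl(2)[of n] in auto)
    then show ?thesis by (simp add: t_def)
  qed
  have 2: "0 \<le> t n" for n
  proof -
    have "0 \<le> u * real (Suc n)" using assms by simp
    then have "0 \<le> \<lfloor>u * real (Suc n)\<rfloor>" by simp
    then show ?thesis by (simp add: t_def)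
  qed
  have 3: "t n \<le> 1" for n using hi[of n] assms by simp
  have "(\<lambda>n. u - 1 / real (Suc n)) \<longlonglongrightarrow> u - 0"
    by (intro tendsto_diff tendsto_const) (use LIMSEQ_inverse_real_of_nat in \<open>simp add: inverse_eq_divide\<close>)
  then have 4: "t \<longlonglongrightarrow> u" using lo hi by (intro tendsto_sandwich[of "\<lambda>n. u - 1 / real (Suc n)" t sequentially "\<lambda>n. u"]) auto
  show ?thesis using 1 2 3 4 that by blast
qed

lemma convex_closure_rat_convex:
  fixes Q :: "'v::real_normed_vector set"
  assumes comb: "\<And>q r t. q \<in> Q \<Longrightarrow> r \<in> Q \<Longrightarrow> t \<in> \<rat> \<Longrightarrow> 0 \<le> t \<Longrightarrow> t \<le> 1
      \<Longrightarrow> (1 - t) *\<^sub>R q + t *\<^sub>R r \<in> Q"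
  shows "convex (closure Q)"
  unfolding convex_alt
proof (intro ballI allI impI)
  fix x y and u :: real assume x: "x \<in> closure Q" and y: "y \<in> closure Q" and u: "0 \<le> u \<and> u \<le> 1"
  obtain a where a: "\<forall>n. a n \<in> Q" "a \<longlonglongrightarrow> x" using x[unfolded closure_sequential] by blast
  obtain b where b: "\<forall>n. b n \<in> Q" "b \<longlonglongrightarrow> y" using y[unfolded closure_sequential] by blast
  obtain t where t: "\<And>n. t n \<in> \<rat>" "\<And>n. 0 \<le> t n" "\<And>n. t n \<le> 1" "t \<longlonglongrightarrow> u"
    using rat_unit_interval_approx u by blast
  have "\<forall>n. (1 - t n) *\<^sub>R a n + t n *\<^sub>R b n \<in> Q" using comb a b t by blast
  moreover have "(\<lambda>n. (1 - t n) *\<^sub>R a n + t n *\<^sub>R b n) \<longlonglongrightarrow> (1 - u) *\<^sub>R x + u *\<^sub>R y"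
    using a b t by (intro tendsto_intros) auto
  ultimately show "(1 - u) *\<^sub>R x + u *\<^sub>R y \<in> closure Q"
    unfolding closure_sequential by (intro exI[of _ "\<lambda>n. (1 - t n) *\<^sub>R a n + t n *\<^sub>R b n"]) simp
qed

lemma separable_invariant_subset:
  fixes F :: "'v::{real_inner,complete_space} \<Rightarrow> 'v"
  assumes D: "closed D" "convex D" "d \<in> D" and inv: "F ` D \<subseteq> D"
    and wc: "weakly_seq_continuous_on D F"
  obtains Q where "countable Q" "Q \<noteq> {}" "Q \<subseteq> D" "convex (closure Q)" "F ` closure Q \<subseteq> closure Q"
proof
  define Q where "Q = (\<Union>k. rat_hull_iter F d k)"
  show "countable Q" unfolding Q_def by (intro countable_UN countable_rat_hull_iter) auto
  show "Q \<noteq> {}" unfolding Q_def using rat_hull_iter.simps(1) by blast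
  show QD: "Q \<subseteq> D" unfolding Q_def using rat_hull_iter_subset[OF D(3) inv D(2)] by blast
  have FQ: "F q \<in> Q" if q: "q \<in> Q" for q
  proof -
    obtain k where "q \<in> rat_hull_iter F d k" using q unfolding Q_def by blast
    then have "F q \<in> rat_hull_iter F d (Suc k)" by simp
    then show ?thesis unfolding Q_def by blast
  qed
  have "(1 - t) *\<^sub>R q + t *\<^sub>R r \<in> Q"
    if qr: "q \<in> Q" "r \<in> Q" and t: "t \<in> \<rat>" "0 \<le> t" "t \<le> 1" for q r t
  proof -
    obtain k l where "q \<in> rat_hull_iter F d k" "r \<in> rat_hull_iter F d l"
      using qr unfolding Q_def by blast
    then have "q \<in> rat_hull_iter F d (max k l)" "r \<in> rat_hull_iter F d (max k l)"
      using rat_hull_iter_mono[of k "max k l" F d] rat_hull_iter_mono[of l "max k l" F d] by auto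
    then have "(q, r, t) \<in> rat_hull_iter F d (max k l) \<times> rat_hull_iter F d (max k l) \<times> (\<rat> \<inter> {0..1})"
      using t by auto
    then have "(1 - t) *\<^sub>R q + t *\<^sub>R r \<in> rat_hull_iter F d (Suc (max k l))"
      unfolding rat_hull_iter.simps by (intro UnI2 rev_image_eqI[of "(q, r, t)"]) auto
    then show ?thesis unfolding Q_def by blast
  qed
  then show cv: "convex (closure Q)" by (rule convex_closure_rat_convex)
  show "F ` closure Q \<subseteq> closure Q"
  proof clarify
    fix x assume x: "x \<in> closure Q"
    obtain a where a: "\<forall>n. a n \<in> Q" "a \<longlonglongrightarrow> x" using x[unfolded closure_sequential] by blast
    have "closure Q \<subseteq> D" using QD D(1) closure_minimal by blast
    then have aD: "\<And>n. a n \<in> D" and xD: "x \<in> D" using x a(1) QD by auto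
    have Fa: "F (a n) \<in> closure Q" for n
      using FQ[OF a(1)[rule_format]] closure_subset by blast
    show "F x \<in> closure Q"
      by (rule closed_convex_weak_limit[OF closed_closure cv Fa
            weakly_seq_continuous_onD[OF wc aD xD tendsto_imp_weak_conv[OF a(2)]]])
  qed
qed

lemma separated_sequence_exists:
  assumes far: "\<And>N. finite N \<Longrightarrow> N \<subseteq> A \<Longrightarrow> \<exists>r\<in>A. \<forall>p\<in>N. P r p"
  shows "\<exists>y :: nat \<Rightarrow> 'a. (\<forall>n. y n \<in> A) \<and> (\<forall>m n. m < n \<longrightarrow> P (y n) (y m))"
proof -
  define Q where "Q f n r \<longleftrightarrow> r \<in> A \<and> (\<forall>m<n. P r (f m))" for f :: "nat \<Rightarrow> 'a" and n r
  have "\<exists>r. Q f n r" if "\<And>m. m < n \<Longrightarrow> Q f m (f m)" for f n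
  proof -
    have "f ` {..<n} \<subseteq> A" using that by (auto simp: Q_def)
    then show ?thesis using far[of "f ` {..<n}"] by (auto simp: Q_def)
  qed
  then obtain y where "\<forall>n. Q y n (y n)"
    using dependent_wellorder_choice[of Q] by (auto simp: Q_def)
  then show ?thesis by (auto simp: Q_def)
qed

text \<open>No bounded sequence is uniformly separated for the weak seminorm, since along a
  weakly convergent subsequence the seminorm of the differences tends to \<open>0\<close>.\<close>

lemma weak_seminorm_close_pair:
  fixes y :: "nat \<Rightarrow> 'v::{real_inner,complete_space}"
  assumes e_bound: "\<And>k. norm (e k) \<le> R" and M: "\<And>n. norm (y n) \<le> M" and \<epsilon>: "\<epsilon> > 0"
  obtains m n where "m < n" "weak_seminorm e (y n - y m) < \<epsilon>"
proof -
  obtain \<sigma> w where \<sigma>: "strict_mono \<sigma>" and w: "weak_conv (y \<circ> \<sigma>) w"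
    using bounded_seq_weak_convergent_subseq[of y M] M by blast
  have "norm (y (\<sigma> n) - w) \<le> M + norm w" for n
    using M[of "\<sigma> n"] norm_triangle_ineq4[of "y (\<sigma> n)" w] by linarith
  moreover have "weak_conv (\<lambda>n. y (\<sigma> n) - w) 0"
    using weak_conv_diff_limit[OF w] by (simp add: o_def)
  ultimately have "(\<lambda>n. weak_seminorm e (y (\<sigma> n) - w)) \<longlonglongrightarrow> 0"
    by (rule weak_seminorm_tendsto_0[where e=e and R=R, OF e_bound])
  then have "\<forall>\<^sub>F n in sequentially. weak_seminorm e (y (\<sigma> n) - w) < \<epsilon> / 2"
    using \<epsilon> by (intro order_tendstoD(2)) auto
  then obtain N where N: "\<And>n. n \<ge> N \<Longrightarrow> weak_seminorm e (y (\<sigma> n) - w) < \<epsilon> / 2"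
    unfolding eventually_sequentially by blast
  have "weak_seminorm e (y (\<sigma> (Suc N)) - y (\<sigma> N))
      \<le> weak_seminorm e (y (\<sigma> (Suc N)) - w) + weak_seminorm e (y (\<sigma> N) - w)"
    using weak_seminorm_triangle_diff[where e=e and R=R, OF e_bound,
        of "y (\<sigma> (Suc N)) - w" "y (\<sigma> N) - w"] by simp
  also have "\<dots> < \<epsilon>" using N[of N] N[of "Suc N"] by simp
  finally have close: "weak_seminorm e (y (\<sigma> (Suc N)) - y (\<sigma> N)) < \<epsilon>" .
  have "\<sigma> N < \<sigma> (Suc N)" using strict_monoD[OF \<sigma>] by simp
  then show thesis by (rule that[OF _ close])
qed

context
  fixes F :: "'v::{real_inner,complete_space} \<Rightarrow> 'v" and D :: "'v set"
    and e :: "nat \<Rightarrow> 'v" and R :: real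
  assumes D: "closed D" "convex D" "D \<noteq> {}" and D_bound: "\<And>x. x \<in> D \<Longrightarrow> norm x \<le> R"
    and invariant: "F ` D \<subseteq> D" and wc: "weakly_seq_continuous_on D F"
    and e_bound: "\<And>k. norm (e k) \<le> R"
begin

lemma weak_seminorm_finite_net:
  assumes \<epsilon>: "\<epsilon> > 0"
  obtains N where "finite N" "N \<noteq> {}" "N \<subseteq> D"
    "\<And>y. y \<in> F ` D \<Longrightarrow> \<exists>p\<in>N. weak_seminorm e (y - p) < \<epsilon>"
proof (rule ccontr)
  note net = that
  assume "\<not> thesis"
  have "\<exists>r\<in>F ` D. \<forall>p\<in>N. \<epsilon> \<le> weak_seminorm e (r - p)" if "finite N" "N \<subseteq> F ` D" for N
  proof (cases "N = {}")
    case True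
    then show ?thesis using D(3) by auto
  next
    case False
    have "N \<subseteq> D" using that(2) invariant by blast
    then have "\<not> (\<forall>r\<in>F ` D. \<exists>p\<in>N. weak_seminorm e (r - p) < \<epsilon>)"
      using net[OF that(1) False] \<open>\<not> thesis\<close> by blast
    then show ?thesis by (auto simp: not_less)
  qed
  then obtain y :: "nat \<Rightarrow> 'v" where y: "\<forall>n. y n \<in> F ` D" "\<forall>m n. m < n \<longrightarrow> \<epsilon> \<le> weak_seminorm e (y n - y m)"
    using separated_sequence_exists[of "F ` D" "\<lambda>r p. \<epsilon> \<le> weak_seminorm e (r - p)"] by blast
  have "y n \<in> D" for n using y(1) invariant by blast
  then have "norm (y n) \<le> R" for n using D_bound by blast
  then obtain m n where mn: "m < n" "weak_seminorm e (y n - y m) < \<epsilon>"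
    by (rule weak_seminorm_close_pair[where e=e and R=R and y=y, OF e_bound _ \<epsilon>])
  then have "\<epsilon> \<le> weak_seminorm e (y n - y m)" using y(2) by blast
  with mn(2) show False by simp
qed

lemma tendsto_weak_seminorm_image:
  assumes u: "\<And>n. u n \<in> D" "a \<in> D" "u \<longlonglongrightarrow> a"
  shows "(\<lambda>n. weak_seminorm e (F (u n) - q)) \<longlonglongrightarrow> weak_seminorm e (F a - q)"
proof -
  have "weak_conv (\<lambda>n. F (u n)) (F a)"
    by (rule weakly_seq_continuous_onD[OF wc u(1,2) tendsto_imp_weak_conv[OF u(3)]])
  then have "weak_conv (\<lambda>n. F (u n) - q) (F a - q)"
    by (rule weak_conv_diff[OF _ weak_conv_const])
  moreover have "norm (F (u n) - q) \<le> R + norm q" for n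
    using D_bound[of "F (u n)"] invariant u(1) norm_triangle_ineq4[of "F (u n)" q] by fastforce
  ultimately show ?thesis
    by (intro tendsto_weak_seminorm[where e=e and R=R, OF e_bound])
qed

text \<open>Brouwer's theorem applied to the Schauder approximation of \<open>F\<close> on the convex hull
  of a finite net.\<close>

lemma approximate_weak_seminorm_fixpoint:
  assumes \<epsilon>: "\<epsilon> > 0"
  obtains x where "x \<in> D" "weak_seminorm e (x - F x) \<le> \<epsilon>"
proof -
  obtain N where N: "finite N" "N \<noteq> {}" "N \<subseteq> D"
    and net: "\<And>y. y \<in> F ` D \<Longrightarrow> \<exists>p\<in>N. weak_seminorm e (y - p) < \<epsilon>"
    using weak_seminorm_finite_net[OF \<epsilon>] by blast
  let ?P = "convex hull N"
  let ?g = "\<lambda>x. schauder_proj e \<epsilon> N (F x)"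
  have PD: "?P \<subseteq> D" using N(3) D(2) by (simp add: hull_minimal)
  have near: "\<exists>p\<in>N. weak_seminorm e (F x - p) < \<epsilon>" if "x \<in> ?P" for x
    using net PD that by blast
  have "?g ` ?P \<subseteq> ?P"
    using near schauder_proj_in_convex_hull[where e=e and R=R, OF e_bound N(1)] by blast
  moreover have "continuous_on ?P ?g"
  proof (rule continuous_on_sequentiallyI)
    fix u a assume u: "\<forall>n. u n \<in> ?P" "a \<in> ?P" "u \<longlonglongrightarrow> a"
    obtain p where p: "p \<in> N" "weak_seminorm e (F a - p) < \<epsilon>" using near[OF u(2)] by blast
    have uD: "\<And>n. u n \<in> D" and aD: "a \<in> D" using u(1,2) PD by auto
    show "(\<lambda>n. ?g (u n)) \<longlonglongrightarrow> ?g a"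
      by (rule tendsto_schauder_proj[where e=e and R=R, OF e_bound N(1) p
            tendsto_weak_seminorm_image[OF uD aD u(3)]])
  qed
  ultimately obtain x where x: "x \<in> ?P" "?g x = x"
    using brouwer_convex_hull[OF N(1,2)] by blast
  obtain p where "p \<in> N" "weak_seminorm e (F x - p) < \<epsilon>" using near[OF x(1)] by blast
  then have "weak_seminorm e (x - F x) \<le> \<epsilon>"
    using schauder_proj_close[where e=e and R=R, OF e_bound N(1)] x(2) by metis
  with x(1) PD show thesis using that by blast
qed

lemma weak_seminorm_fixpoint:
  obtains x where "x \<in> D" "weak_seminorm e (x - F x) = 0"
proof -
  have "\<forall>n. \<exists>x\<in>D. weak_seminorm e (x - F x) \<le> 1 / real (Suc n)"
    using approximate_weak_seminorm_fixpoint by (metis of_nat_0_less_iff zero_less_Suc zero_less_divide_1_iff)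
  then obtain xs where xs: "\<And>n. xs n \<in> D" "\<And>n. weak_seminorm e (xs n - F (xs n)) \<le> 1 / real (Suc n)"
    by metis
  obtain \<sigma> x where \<sigma>: "strict_mono \<sigma>" and w: "weak_conv (xs \<circ> \<sigma>) x"
    using bounded_seq_weak_convergent_subseq[of xs R] D_bound xs(1) by blast
  have xD: "x \<in> D" using closed_convex_weak_limit[OF D(1,2) _ w] xs(1) by simp
  have "weak_conv (\<lambda>n. F (xs (\<sigma> n))) (F x)"
    using weakly_seq_continuous_onD[OF wc _ xD w] xs(1) by (simp add: o_def)
  then have "weak_conv (\<lambda>n. xs (\<sigma> n) - F (xs (\<sigma> n))) (x - F x)"
    using weak_conv_diff[OF w] by (simp add: o_def)
  moreover have "norm (xs (\<sigma> n) - F (xs (\<sigma> n))) \<le> R + R" for n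
    using D_bound[of "xs (\<sigma> n)"] D_bound[of "F (xs (\<sigma> n))"] xs(1) invariant
      norm_triangle_ineq4[of "xs (\<sigma> n)" "F (xs (\<sigma> n))"] by fastforce
  ultimately have "(\<lambda>n. weak_seminorm e (xs (\<sigma> n) - F (xs (\<sigma> n)))) \<longlonglongrightarrow> weak_seminorm e (x - F x)"
    by (intro tendsto_weak_seminorm[where e=e and R=R, OF e_bound])
  moreover have "(\<lambda>n. 1 / real (Suc (\<sigma> n))) \<longlonglongrightarrow> 0"
    using LIMSEQ_subseq_LIMSEQ[OF LIMSEQ_Suc[OF lim_inverse_n'] \<sigma>] by (simp add: o_def)
  ultimately have "weak_seminorm e (x - F x) \<le> 0"
    using xs(2) by (intro LIMSEQ_le[of _ _ "\<lambda>n. 1 / real (Suc (\<sigma> n))"]) auto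
  then show thesis
    using that xD weak_seminorm_nonneg[where e=e and R=R, OF e_bound, of "x - F x"] by simp
qed

end

lemma weakly_seq_continuous_on_subset:
  "weakly_seq_continuous_on D F \<Longrightarrow> D' \<subseteq> D \<Longrightarrow> weakly_seq_continuous_on D' F"
  unfolding weakly_seq_continuous_on_def by blast

text \<open>A Schauder--Tychonoff type theorem: the weak topology on a bounded set is not
  metrizable in general, so the argument first passes to a separable invariant set,
  where the weak seminorm built on a dense sequence detects fixed points.\<close>

theorem weakly_seq_continuous_fixpoint:
  fixes F :: "'v::{real_inner,complete_space} \<Rightarrow> 'v"
  assumes D: "closed D" "convex D" "D \<noteq> {}" "bounded D" and invariant: "F ` D \<subseteq> D"
    and wc: "weakly_seq_continuous_on D F"
  obtains x where "x \<in> D" "F x = x"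
proof -
  obtain d where d: "d \<in> D" using D(3) by blast
  obtain Q where Q: "countable Q" "Q \<noteq> {}" "Q \<subseteq> D" "convex (closure Q)"
    "F ` closure Q \<subseteq> closure Q"
    using separable_invariant_subset[OF D(1,2) d invariant wc] by blast
  obtain R where R: "\<And>x. x \<in> D \<Longrightarrow> norm x \<le> R" using D(4) bounded_iff by blast
  have QD: "closure Q \<subseteq> D" using Q(3) D(1) closure_minimal by blast
  define e where "e = from_nat_into Q"
  have e: "range e = Q" unfolding e_def using Q(1,2) by simp
  have e_bound: "norm (e k) \<le> R" for k using e Q(3) R by blast
  have "closure Q \<noteq> {}" using Q(2) by simp
  moreover have "norm x \<le> R" if "x \<in> closure Q" for x using that QD R by blast
  ultimately obtain x where x: "x \<in> closure Q" "weak_seminorm e (x - F x) = 0"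
    by (rule weak_seminorm_fixpoint[OF closed_closure Q(4) _ _ Q(5)
          weakly_seq_continuous_on_subset[OF wc QD] e_bound])
  have "Q \<subseteq> {q. inner q (x - F x) = 0}"
    using weak_seminorm_eq_0_imp_orthogonal[where e=e and R=R, OF e_bound x(2)] e by auto
  then have orth: "closure Q \<subseteq> {q. inner q (x - F x) = 0}"
    by (intro closure_minimal closed_Collect_eq continuous_intros) auto
  have "F x \<in> closure Q" using x(1) Q(5) by blast
  then have "inner x (x - F x) = 0" "inner (F x) (x - F x) = 0"
    using orth x(1) by auto
  then have "inner (x - F x) (x - F x) = 0" by (simp add: inner_diff_left)
  then show thesis using that x(1) QD by auto
qed

section \<open>Quasi-variational inequalities\<close>

lemma quadratic_growth_bound:
  fixes t :: real
  assumes "\<alpha> > 0" "Y \<ge> 0" "t \<ge> 0" "\<alpha> * t\<^sup>2 \<le> X * t + Y"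
  shows "t \<le> max 1 ((X + Y) / \<alpha>)"
proof (cases "t \<le> 1")
  case False
  then have "\<alpha> * t * t \<le> (X + Y) * t"
    using assms(2,4) mult_left_mono[of 1 t Y] by (simp add: power2_eq_square algebra_simps)
  then have "\<alpha> * t \<le> X + Y" using False by simp
  then have "t \<le> (X + Y) / \<alpha>" using assms(1) by (simp add: pos_le_divide_eq mult.commute)
  then show ?thesis by simp
qed simp

definition vi_solution :: "('v::minus \<Rightarrow> 'v \<Rightarrow> real) \<Rightarrow> ('v \<Rightarrow> real) \<Rightarrow> 'v set \<Rightarrow> 'v \<Rightarrow> bool" where
  "vi_solution B m S u \<longleftrightarrow> u \<in> S \<and> (\<forall>v\<in>S. m (v - u) \<le> B u (v - u))"

context
  fixes C :: "'v::{real_inner,complete_space} set" and K :: "'v \<Rightarrow> 'v set"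
    and B :: "'v \<Rightarrow> 'v \<Rightarrow> real" and m :: "'v \<Rightarrow> real" and C0 :: "'v set" and \<alpha> :: real
  assumes C: "closed C" "convex C" "C \<noteq> {}" and hK: "hyp_K C K"
    and B: "bounded_bilinear B" and \<alpha>: "\<alpha> > 0" and coercive: "\<And>v. B v v \<ge> \<alpha> * (norm v)\<^sup>2"
    and m: "bounded_linear m" and C0: "bounded C0" "\<And>u. u \<in> C \<Longrightarrow> K u \<inter> C0 \<noteq> {}"
begin

lemma K_values: "u \<in> C \<Longrightarrow> K u \<subseteq> C \<and> K u \<noteq> {} \<and> closed (K u) \<and> convex (K u)"
  using hK unfolding hyp_K_def by blast

lemma K_strong_approx:
  assumes "\<And>n. x n \<in> C" "xl \<in> C" "weak_conv x xl" "y \<in> K xl"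
  obtains yn where "\<And>n. yn n \<in> K (x n)" "yn \<longlonglongrightarrow> y"
proof -
  have "\<forall>x xl y. (\<forall>n. x n \<in> C) \<longrightarrow> xl \<in> C \<longrightarrow> weak_conv x xl \<longrightarrow> y \<in> K xl \<longrightarrow>
      (\<exists>yn. (\<forall>n. yn n \<in> C \<and> yn n \<in> K (x n)) \<and> yn \<longlonglongrightarrow> y)"
    using hK unfolding hyp_K_def by blast
  then obtain yn where "\<forall>n. yn n \<in> C \<and> yn n \<in> K (x n)" "yn \<longlonglongrightarrow> y"
    using assms by blast
  then show thesis using that by blast
qed

lemma K_weak_closed_graph:
  assumes "\<And>n. x n \<in> C" "\<And>n. y n \<in> K (x n)" "xl \<in> C" "weak_conv x xl" "weak_conv y yl"
  shows "yl \<in> K xl"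
proof -
  have "\<forall>x y xl yl. (\<forall>n. x n \<in> C) \<longrightarrow> (\<forall>n. y n \<in> C) \<longrightarrow> (\<forall>n. y n \<in> K (x n)) \<longrightarrow>
      xl \<in> C \<longrightarrow> weak_conv x xl \<longrightarrow> weak_conv y yl \<longrightarrow> yl \<in> K xl"
    using hK unfolding hyp_K_def by blast
  moreover have "\<forall>n. y n \<in> C" using assms(1,2) K_values by blast
  ultimately show ?thesis using assms by blast
qed

lemma B_nonneg: "B w w \<ge> 0"
  using coercive[of w] \<alpha> by (smt (verit) mult_nonneg_nonneg zero_le_power2)

lemma vi_solution_exists:
  assumes "w \<in> C" shows "\<exists>u. vi_solution B m (K w) u"
proof -
  have K: "closed (K w)" "convex (K w)" "K w \<noteq> {}" using K_values[OF assms] by auto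
  obtain u where "u \<in> K w" "\<And>v. v \<in> K w \<Longrightarrow> B u (v - u) \<ge> m (v - u)"
    using stampacchia[OF B \<alpha> coercive m K] by blast
  then show ?thesis unfolding vi_solution_def by blast
qed

lemma vi_solution_unique: "vi_solution B m S u1 \<Longrightarrow> vi_solution B m S u2 \<Longrightarrow> u1 = u2"
  using stampacchia_unique[OF B \<alpha> coercive m] unfolding vi_solution_def by blast

lemma vi_solution_norm_bound:
  obtains Rb where "\<And>w u. w \<in> C \<Longrightarrow> vi_solution B m (K w) u \<Longrightarrow> norm u \<le> Rb"
proof -
  interpret B: bounded_bilinear B by (rule B)
  interpret m: bounded_linear m by (rule m)
  obtain R0 where R0: "\<And>c. c \<in> C0 \<Longrightarrow> norm c \<le> R0" using C0(1) bounded_iff by blast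
  obtain KB where KB: "\<And>a b. norm (B a b) \<le> norm a * norm b * KB" "KB > 0"
    using B.pos_bounded by blast
  obtain Km where Km: "\<And>x. norm (m x) \<le> norm x * Km" "Km > 0" using m.pos_bounded by blast
  have "norm u \<le> max 1 ((R0 * KB + Km + R0 * Km) / \<alpha>)"
    if w: "w \<in> C" and u: "vi_solution B m (K w) u" for w u
  proof -
    obtain c where c: "c \<in> K w" "c \<in> C0" using C0(2)[OF w] by blast
    have cR: "norm c \<le> R0" using R0 c(2) .
    then have "R0 \<ge> 0" using norm_ge_zero order_trans by blast
    have "B u (c - u) \<ge> m (c - u)" using u c(1) by (simp add: vi_solution_def)
    then have "B u u \<le> B u c - m c + m u" by (simp add: B.diff_right m.diff)
    also have "\<dots> \<le> norm u * R0 * KB + R0 * Km + norm u * Km"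
    proof -
      have "B u c \<le> norm u * R0 * KB"
        using KB(1)[of u c] cR KB(2) by (smt (verit) mult_left_mono mult_right_mono norm_ge_zero
            real_norm_def abs_le_iff mult.assoc)
      moreover have "- m c \<le> R0 * Km"
        using Km(1)[of c] cR Km(2) by (smt (verit) mult_right_mono norm_ge_zero real_norm_def)
      moreover have "m u \<le> norm u * Km" using Km(1)[of u] by simp
      ultimately show ?thesis by linarith
    qed
    finally have "\<alpha> * (norm u)\<^sup>2 \<le> (R0 * KB + Km) * norm u + R0 * Km"
      using coercive[of u] by (simp add: algebra_simps)
    then show ?thesis
      using quadratic_growth_bound[OF \<alpha>, of "R0 * Km" "norm u" "R0 * KB + Km"] \<open>R0 \<ge> 0\<close> Km(2)
      by (simp add: add.assoc)
  qed
  then show thesis using that by blast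
qed

definition vi_map :: "'v \<Rightarrow> 'v" where
  "vi_map w = (SOME u. vi_solution B m (K w) u)"

lemma vi_map_solution: "w \<in> C \<Longrightarrow> vi_solution B m (K w) (vi_map w)"
  unfolding vi_map_def using vi_solution_exists by (rule someI_ex)

text \<open>Stability of solutions under weak convergence of the data: \<open>(\<H>\<^sub>K)(ii)\<close> keeps
  the limit admissible, \<open>(\<H>\<^sub>K)(i)\<close> provides strongly converging test functions.\<close>

lemma vi_solution_weak_limit:
  assumes x: "\<And>n. x n \<in> C" "xl \<in> C" "weak_conv x xl"
    and u: "\<And>n. vi_solution B m (K (x n)) (u n)" and M: "\<And>n. norm (u n) \<le> M"
    and uw: "weak_conv u ul"
  shows "vi_solution B m (K xl) ul"
  unfolding vi_solution_def
proof
  show "ul \<in> K xl"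
    using K_weak_closed_graph[OF x(1) _ x(2,3) uw] u by (simp add: vi_solution_def)
  show "\<forall>v\<in>K xl. m (v - ul) \<le> B ul (v - ul)"
  proof
    fix v assume "v \<in> K xl"
    then obtain vn where vn: "\<And>n. vn n \<in> K (x n)" "vn \<longlonglongrightarrow> v"
      using K_strong_approx[OF x] by blast
    show "m (v - ul) \<le> B ul (v - ul)"
      by (rule variational_inequality_weak_limit[OF B B_nonneg m uw M vn(2)])
        (use u vn(1) in \<open>simp add: vi_solution_def\<close>)
  qed
qed

lemma vi_map_weakly_seq_continuous: "weakly_seq_continuous_on C vi_map"
  unfolding weakly_seq_continuous_on_def
proof (intro allI impI)
  fix x xl assume x: "\<forall>n. x n \<in> C" "xl \<in> C" "weak_conv x xl"
  obtain Rb where Rb: "\<And>w u. w \<in> C \<Longrightarrow> vi_solution B m (K w) u \<Longrightarrow> norm u \<le> Rb"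
    using vi_solution_norm_bound by blast
  show "weak_conv (\<lambda>n. vi_map (x n)) (vi_map xl)"
  proof (rule weak_conv_subseq_criterion)
    fix \<sigma> :: "nat \<Rightarrow> nat" assume \<sigma>: "strict_mono \<sigma>"
    have bound: "norm (vi_map (x (\<sigma> n))) \<le> Rb" for n using Rb vi_map_solution x(1) by blast
    obtain \<tau> ul where \<tau>: "strict_mono \<tau>" and ul: "weak_conv ((\<lambda>n. vi_map (x (\<sigma> n))) \<circ> \<tau>) ul"
      using bounded_seq_weak_convergent_subseq[of "\<lambda>n. vi_map (x (\<sigma> n))" Rb] bound by blast
    have "weak_conv (x \<circ> (\<sigma> \<circ> \<tau>)) xl"
      using weak_conv_subseq[OF x(3) strict_mono_o[OF \<sigma> \<tau>]] .
    then have "vi_solution B m (K xl) ul"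
      using vi_solution_weak_limit[of "x \<circ> (\<sigma> \<circ> \<tau>)" xl "\<lambda>n. vi_map (x (\<sigma> (\<tau> n)))" Rb ul]
        x(1,2) ul bound vi_map_solution by (simp add: o_def)
    then have "ul = vi_map xl"
      using vi_solution_unique vi_map_solution[OF x(2)] by blast
    then show "\<exists>\<tau>. strict_mono \<tau> \<and> weak_conv ((\<lambda>n. vi_map (x n)) \<circ> \<sigma> \<circ> \<tau>) (vi_map xl)"
      using \<tau> ul by (auto simp: o_def)
  qed
qed

text \<open>Solutions of the quasi-variational inequality are the fixed points of \<open>vi_map\<close>,
  which maps the bounded closed convex set \<open>C \<inter> cball 0 Rb\<close> into itself.\<close>

theorem qvi_solution_set:
  defines "S \<equiv> {u \<in> C. u \<in> K u \<and> (\<forall>v\<in>K u. B u (v - u) \<ge> m (v - u))}"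
  shows "S \<noteq> {} \<and> bounded S \<and> weakly_closed S"
proof -
  have S: "S = {u \<in> C. vi_solution B m (K u) u}" by (auto simp: S_def vi_solution_def)
  obtain Rb where Rb: "\<And>w u. w \<in> C \<Longrightarrow> vi_solution B m (K w) u \<Longrightarrow> norm u \<le> Rb"
    using vi_solution_norm_bound by blast
  define D where "D = C \<inter> cball 0 Rb"
  have D_map: "vi_map w \<in> D" if "w \<in> C" for w
    using vi_map_solution[OF that] Rb[OF that] K_values[OF that]
    unfolding D_def vi_solution_def by auto
  obtain x where "x \<in> D" "vi_map x = x"
  proof (rule weakly_seq_continuous_fixpoint)
    show "closed D" "convex D" "bounded D"
      unfolding D_def using C(1,2) by (auto intro: closed_Int convex_Int bounded_Int)
    show "D \<noteq> {}" using D_map C(3) by blast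
    show "vi_map ` D \<subseteq> D" using D_map unfolding D_def by auto
    show "weakly_seq_continuous_on D vi_map"
      by (rule weakly_seq_continuous_on_subset[OF vi_map_weakly_seq_continuous])
        (auto simp: D_def)
  qed
  then have "x \<in> S" using vi_map_solution[of x] unfolding S D_def by auto
  moreover have "bounded S" unfolding S bounded_iff using Rb by blast
  moreover have "weakly_closed S"
    unfolding weakly_closed_def S
  proof (intro allI impI)
    fix x y assume xS: "\<forall>n. x n \<in> {u \<in> C. vi_solution B m (K u) u}" and w: "weak_conv x y"
    have xC: "\<And>n. x n \<in> C" using xS by blast
    have yC: "y \<in> C" using closed_convex_weak_limit[OF C(1,2) xC w] .
    have "vi_solution B m (K y) y"
      by (rule vi_solution_weak_limit[OF xC yC w _ _ w]) (use xS Rb in blast)+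
    then show "y \<in> {u \<in> C. vi_solution B m (K u) u}" using yC by blast
  qed
  ultimately show ?thesis by blast
qed

end

lemma trilinear_bounded_bilinear:
  fixes T :: "'b::real_normed_vector \<Rightarrow> 'v::real_normed_vector \<Rightarrow> 'v \<Rightarrow> real"
  assumes T: "trilinear T" and bound: "\<And>a u v. \<bar>T a u v\<bar> \<le> \<beta> * norm a * norm u * norm v"
  shows "bounded_bilinear (T a)"
proof
  have L2: "linear (\<lambda>u. T a u v)" and L3: "linear (\<lambda>v. T a u v)" for u v
    using T unfolding trilinear_def by blast+
  show "T a (x + y) z = T a x z + T a y z" for x y z using L2[of z] by (simp add: linear_iff)
  show "T a x (y + z) = T a x y + T a x z" for x y z using L3[of x] by (simp add: linear_iff)
  show "T a (r *\<^sub>R x) y = r *\<^sub>R T a x y" for r x y using L2[of y] by (simp add: linear_iff)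
  show "T a x (r *\<^sub>R y) = r *\<^sub>R T a x y" for r x y using L3[of x] by (simp add: linear_iff)
  show "\<exists>K. \<forall>x y. norm (T a x y) \<le> norm x * norm y * K"
    using bound by (intro exI[of _ "\<beta> * norm a"]) (simp add: mult_ac)
qed

theorem corollary2p4:
  fixes C :: "'v::{real_inner, complete_space} set"
    and K :: "'v \<Rightarrow> 'v set"
    and A :: "'b::banach set"
    and m :: "'v \<Rightarrow> real"
    and C0 :: "'v set"
    and T :: "'b \<Rightarrow> 'v \<Rightarrow> 'v \<Rightarrow> real"
    and \<alpha> \<beta> :: real
  assumes "C \<noteq> {}" and "closed C" and "convex C"
    and "bounded_linear m"
    and "hyp_K C K"
    and "bounded C0" and "\<forall>u\<in>C. K u \<inter> C0 \<noteq> {}"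
    and "trilinear T"
    and "\<alpha> > 0" and "\<beta> > 0"
    and "\<forall>a u v. \<bar>T a u v\<bar> \<le> \<beta> * norm a * norm u * norm v"
    and "\<forall>a\<in>A. \<forall>v. T a v v \<ge> \<alpha> * (norm v)\<^sup>2"
    and "a \<in> A"
  shows "let S = {u \<in> C. u \<in> K u \<and> (\<forall>v\<in>K u. T a u (v - u) \<ge> m (v - u))}
         in S \<noteq> {} \<and> bounded S \<and> weakly_closed S"
proof -
  have "bounded_bilinear (T a)"
    using trilinear_bounded_bilinear[OF assms(8)] assms(11) by blast
  moreover have "\<And>v. T a v v \<ge> \<alpha> * (norm v)\<^sup>2" using assms(12,13) by blast
  ultimately show ?thesis
    unfolding Let_def using qvi_solution_set[OF assms(2,3,1,5) _ assms(9) _ assms(4,6)] assms(7)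
    by blast
qed

end
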